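(* For any $\mu,\nu\in(\omega\setminus\{0\})\cup\{\infty\}$ there is a complete theory $T_{\mu,\nu}$ and an expansion $T'_{\mu,\nu}$ of it such that ${\rm ar}(T_{\mu,\nu})=\mu$ and ${\rm ar}(T'_{\mu,\nu})=\nu$.
   Context: An expansion of $T$ is a complete theory $T'\supseteq T$ in a language containing that of $T$. For $n\geq1$, a formula of a theory $T$ is $n$-ary if it is $T$-equivalent to a Boolean combination of $T$-formulas each with at most $n$ free variables; $T$ is unary ($1$-ary) if every formula is $T$-equivalent to a Boolean combination of formulas with one free variable and formulas $x\approx y$; for $n\geq2$, $T$ is $n$-ary if all its formulas are $n$-ary; $T$ is $0$-ary if every formula is $T$-equivalent to a sentence. ${\rm ar}(T)$ is the number $n$ such that $T$ is $n$-ary and not $(n-1)$-ary, and ${\rm ar}(T)=\infty$ if $T$ is $n$-ary for no $n$. *)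

theory Defs
  imports Main "HOL-Library.Extended_Nat"
begin

text \<open>Function and relation symbols are natural numbers; a language is a set of
  (symbol, arity) pairs for function symbols (constants have arity 0) and for
  relation symbols.\<close>

datatype trm = Var nat | Fn nat "trm list"

datatype fm = FBot | FEq trm trm | FRel nat "trm list" | FNeg fm | FConj fm fm | FEx nat fm

record lang =
  fsyms :: "(nat \<times> nat) set"
  rsyms :: "(nat \<times> nat) set"

definition sublang :: "lang \<Rightarrow> lang \<Rightarrow> bool" where
  "sublang L L' \<longleftrightarrow> fsyms L \<subseteq> fsyms L' \<and> rsyms L \<subseteq> rsyms L'"

fun tvars :: "trm \<Rightarrow> nat set" where
  "tvars (Var i) = {i}"
| "tvars (Fn f ts) = (\<Union>t\<in>set ts. tvars t)"

fun fv :: "fm \<Rightarrow> nat set" where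
  "fv FBot = {}"
| "fv (FEq s t) = tvars s \<union> tvars t"
| "fv (FRel r ts) = (\<Union>t\<in>set ts. tvars t)"
| "fv (FNeg p) = fv p"
| "fv (FConj p q) = fv p \<union> fv q"
| "fv (FEx x p) = fv p - {x}"

fun wf_trm :: "lang \<Rightarrow> trm \<Rightarrow> bool" where
  "wf_trm L (Var i) = True"
| "wf_trm L (Fn f ts) = ((f, length ts) \<in> fsyms L \<and> (\<forall>t\<in>set ts. wf_trm L t))"

fun wf_fm :: "lang \<Rightarrow> fm \<Rightarrow> bool" where
  "wf_fm L FBot = True"
| "wf_fm L (FEq s t) = (wf_trm L s \<and> wf_trm L t)"
| "wf_fm L (FRel r ts) = ((r, length ts) \<in> rsyms L \<and> (\<forall>t\<in>set ts. wf_trm L t))"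
| "wf_fm L (FNeg p) = wf_fm L p"
| "wf_fm L (FConj p q) = (wf_fm L p \<and> wf_fm L q)"
| "wf_fm L (FEx x p) = wf_fm L p"

definition sentence :: "lang \<Rightarrow> fm \<Rightarrow> bool" where
  "sentence L p \<longleftrightarrow> wf_fm L p \<and> fv p = {}"

text \<open>Structures have universes that are subsets of \<open>nat\<close>. Since all languages
  here are countable, by downward Loewenheim--Skolem this suffices for
  consistency, consequence and equivalence modulo a theory.\<close>

record struc =
  dom :: "nat set"
  fnI :: "nat \<Rightarrow> nat list \<Rightarrow> nat"
  relI :: "nat \<Rightarrow> nat list \<Rightarrow> bool"

definition is_struc :: "lang \<Rightarrow> struc \<Rightarrow> bool" where
  "is_struc L M \<longleftrightarrow> dom M \<noteq> {} \<and>
     (\<forall>(f, n)\<in>fsyms L. \<forall>xs. length xs = n \<and> set xs \<subseteq> dom M \<longrightarrow> fnI M f xs \<in> dom M)"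

fun eval :: "struc \<Rightarrow> (nat \<Rightarrow> nat) \<Rightarrow> trm \<Rightarrow> nat" where
  "eval M e (Var i) = e i"
| "eval M e (Fn f ts) = fnI M f (map (eval M e) ts)"

fun sat :: "struc \<Rightarrow> (nat \<Rightarrow> nat) \<Rightarrow> fm \<Rightarrow> bool" where
  "sat M e FBot = False"
| "sat M e (FEq s t) = (eval M e s = eval M e t)"
| "sat M e (FRel r ts) = relI M r (map (eval M e) ts)"
| "sat M e (FNeg p) = (\<not> sat M e p)"
| "sat M e (FConj p q) = (sat M e p \<and> sat M e q)"
| "sat M e (FEx x p) = (\<exists>a\<in>dom M. sat M (e(x := a)) p)"

definition is_model :: "lang \<Rightarrow> fm set \<Rightarrow> struc \<Rightarrow> bool" where
  "is_model L T M \<longleftrightarrow> is_struc L M \<and>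
     (\<forall>p\<in>T. \<forall>e. range e \<subseteq> dom M \<longrightarrow> sat M e p)"

definition entails :: "lang \<Rightarrow> fm set \<Rightarrow> fm \<Rightarrow> bool" where
  "entails L T p \<longleftrightarrow> (\<forall>M e. is_model L T M \<and> range e \<subseteq> dom M \<longrightarrow> sat M e p)"

definition complete_theory :: "lang \<Rightarrow> fm set \<Rightarrow> bool" where
  "complete_theory L T \<longleftrightarrow> (\<forall>p\<in>T. sentence L p) \<and> (\<exists>M. is_model L T M) \<and>
     (\<forall>p. sentence L p \<longrightarrow> entails L T p \<or> entails L T (FNeg p))"

definition expansion :: "lang \<Rightarrow> fm set \<Rightarrow> lang \<Rightarrow> fm set \<Rightarrow> bool" where
  "expansion L T L' T' \<longleftrightarrow> sublang L L' \<and> T \<subseteq> T' \<and> complete_theory L' T'"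

definition T_equiv :: "lang \<Rightarrow> fm set \<Rightarrow> fm \<Rightarrow> fm \<Rightarrow> bool" where
  "T_equiv L T p q \<longleftrightarrow>
     (\<forall>M e. is_model L T M \<and> range e \<subseteq> dom M \<longrightarrow> (sat M e p \<longleftrightarrow> sat M e q))"

inductive_set bool_comb :: "fm set \<Rightarrow> fm set" for S where
  base: "p \<in> S \<Longrightarrow> p \<in> bool_comb S"
| neg: "p \<in> bool_comb S \<Longrightarrow> FNeg p \<in> bool_comb S"
| conj: "p \<in> bool_comb S \<Longrightarrow> q \<in> bool_comb S \<Longrightarrow> FConj p q \<in> bool_comb S"

definition nary_fm :: "lang \<Rightarrow> fm set \<Rightarrow> nat \<Rightarrow> fm \<Rightarrow> bool" where
  "nary_fm L T n p \<longleftrightarrow>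
     (\<exists>q\<in>bool_comb {r. wf_fm L r \<and> finite (fv r) \<and> card (fv r) \<le> n}. T_equiv L T p q)"

definition nary_theory :: "lang \<Rightarrow> fm set \<Rightarrow> nat \<Rightarrow> bool" where
  "nary_theory L T n \<longleftrightarrow>
     (if n = 0 then (\<forall>p. wf_fm L p \<longrightarrow> (\<exists>q. sentence L q \<and> T_equiv L T p q))
      else if n = 1 then
        (\<forall>p. wf_fm L p \<longrightarrow>
          (\<exists>q\<in>bool_comb ({r. wf_fm L r \<and> finite (fv r) \<and> card (fv r) \<le> 1}
                           \<union> {FEq (Var i) (Var j) | i j. True}).
             T_equiv L T p q))
      else (\<forall>p. wf_fm L p \<longrightarrow> nary_fm L T n p))"

definition has_ar :: "lang \<Rightarrow> fm set \<Rightarrow> enat \<Rightarrow> bool" where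
  "has_ar L T k \<longleftrightarrow>
     (case k of
        \<infinity> \<Rightarrow> (\<forall>n. \<not> nary_theory L T n)
      | enat n \<Rightarrow> nary_theory L T n \<and> (n \<ge> 1 \<longrightarrow> \<not> nary_theory L T (n - 1)))"

end

theory Submission
  imports Defs "HOL-Combinatorics.Permutations" "HOL-Library.Nat_Bijection"
begin

(* All witnesses are theories of one structure in different relational languages. Its universe
   is a disjoint union of finite blocks; block b has b div 2 + 1 elements and carries a
   (b div 2)-ary orientation: a tuple of distinct elements is oriented iff, completed by the
   missing element, it lists the block in an even order. Even permutations of a block preserve
   the orientation and odd ones reverse it. A formula with at most k free variables cannot
   separate the first k + 1 elements of a block of arity k + 1 from their image under a
   transposition, since an odd permutation becomes even after swapping two elements the
   variables do not reach; so the orientation of that block makes the theory not k-ary.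
   Conversely, if each block the language speaks about is either named pointwise or carries a
   unary predicate and possibly an orientation of arity at most n, then two assignments that
   agree on the atomic formulas with at most n variables are conjugate under an automorphism
   of the relevant reduct, so the theory is n-ary. Choosing orientations, predicates and names in the
   language and in its expansion realises every pair of arities: names lower the arity, and
   orientations of blocks of unbounded arity make it infinite. *)

section \<open>Syntax and semantics\<close>

fun rels :: "fm \<Rightarrow> nat set" where
  "rels FBot = {}"
| "rels (FEq s t) = {}"
| "rels (FRel r ts) = {r}"
| "rels (FNeg p) = rels p"
| "rels (FConj p q) = rels p \<union> rels q"
| "rels (FEx x p) = rels p"

lemma finite_rels: "finite (rels p)"
  by (induct p) auto

lemma finite_tvars: "finite (tvars t)"
  by (induct t) auto

lemma finite_fv: "finite (fv p)"
  by (induct p) (auto simp: finite_tvars)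

lemma eval_cong: "\<forall>v\<in>tvars t. e1 v = e2 v \<Longrightarrow> eval M e1 t = eval M e2 t"
proof (induct t)
  case (Fn f ts)
  then have "map (eval M e1) ts = map (eval M e2) ts" by auto
  then show ?case by (metis eval.simps(2))
qed simp

lemma sat_cong: "\<forall>v\<in>fv p. e1 v = e2 v \<Longrightarrow> sat M e1 p = sat M e2 p"
proof (induct p arbitrary: e1 e2)
  case (FEq s t)
  then show ?case using eval_cong[of s e1 e2 M] eval_cong[of t e1 e2 M] by auto
next
  case (FRel r ts)
  then have "map (eval M e1) ts = map (eval M e2) ts" using eval_cong by auto
  then show ?case by (metis sat.simps(3))
next
  case (FEx x p)
  have "sat M (e1(x := a)) p = sat M (e2(x := a)) p" for a
    using FEx by (intro FEx.hyps) auto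
  then show ?case by simp
next
  case (FConj p q)
  have "sat M e1 p = sat M e2 p" using FConj by (intro FConj.hyps(1)) auto
  moreover have "sat M e1 q = sat M e2 q" using FConj by (intro FConj.hyps(2)) auto
  ultimately show ?case by simp
qed auto

lemma sat_sentence: "fv p = {} \<Longrightarrow> sat M e p = sat M e' p"
  by (rule sat_cong) auto

lemma sat_FRel_Var: "sat M e (FRel r (map Var vs)) = relI M r (map e vs)"
  by (simp add: comp_def)

lemma wf_trm_Var: "fsyms L = {} \<Longrightarrow> wf_trm L t \<Longrightarrow> \<exists>i. t = Var i"
  by (cases t) auto

lemma wf_trms_Var: "fsyms L = {} \<Longrightarrow> \<forall>t\<in>set ts. wf_trm L t \<Longrightarrow> \<exists>vs. ts = map Var vs"
proof (induct ts)
  case (Cons t ts)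
  then obtain vs where "ts = map Var vs" by auto
  moreover obtain i where "t = Var i" using Cons.prems wf_trm_Var by force
  ultimately have "t # ts = map Var (i # vs)" by simp
  then show ?case by (rule exI)
qed simp

lemma wf_fm_rels: "wf_fm L p \<Longrightarrow> r \<in> rels p \<Longrightarrow> \<exists>k. (r, k) \<in> rsyms L"
  by (induct p) auto

lemma wf_trm_sublang: "sublang L L' \<Longrightarrow> wf_trm L t \<Longrightarrow> wf_trm L' t"
  by (induct t) (auto simp: sublang_def)

lemma wf_fm_sublang: "sublang L L' \<Longrightarrow> wf_fm L p \<Longrightarrow> wf_fm L' p"
  by (induct p) (auto simp: sublang_def intro: wf_trm_sublang)

definition preserves_rels :: "struc \<Rightarrow> nat set \<Rightarrow> (nat \<Rightarrow> nat) \<Rightarrow> bool" where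
  "preserves_rels M S \<sigma> \<longleftrightarrow>
     (\<forall>r\<in>S. \<forall>xs. set xs \<subseteq> dom M \<longrightarrow> relI M r (map \<sigma> xs) = relI M r xs)"

lemma sat_automorphism:
  assumes "fsyms L = {}" "wf_fm L p" "bij_betw \<sigma> (dom M) (dom M)"
    and "preserves_rels M (rels p) \<sigma>" "range e \<subseteq> dom M"
  shows "sat M (\<sigma> \<circ> e) p = sat M e p"
  using assms(2,4,5)
proof (induct p arbitrary: e)
  case (FEq s t)
  obtain i j where "s = Var i" "t = Var j"
    using FEq.prems(1) wf_trm_Var[OF assms(1)] by (metis wf_fm.simps(2))
  moreover have "e i \<in> dom M" "e j \<in> dom M" using FEq.prems(3) by auto
  ultimately show ?case using assms(3) by (auto simp: bij_betw_def inj_on_def)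
next
  case (FRel r ts)
  obtain vs where ts: "ts = map Var vs" using FRel.prems(1) wf_trms_Var[OF assms(1)] by auto
  have "set (map e vs) \<subseteq> dom M" "r \<in> rels (FRel r ts)" using FRel.prems(3) by auto
  then show ?case using FRel.prems(2)
    unfolding ts sat_FRel_Var map_map[symmetric] preserves_rels_def by blast
next
  case (FConj p q)
  then show ?case by (simp add: preserves_rels_def)
next
  case (FEx x p)
  have ih: "sat M (\<sigma> \<circ> e(x := b)) p = sat M (e(x := b)) p" if "b \<in> dom M" for b
    using FEx.prems that by (intro FEx.hyps) auto
  have upd: "(\<sigma> \<circ> e)(x := \<sigma> b) = \<sigma> \<circ> e(x := b)" for b by auto
  have onto: "\<sigma> ` dom M = dom M" using assms(3) by (simp add: bij_betw_def)
  show ?case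
  proof
    assume "sat M (\<sigma> \<circ> e) (FEx x p)"
    then obtain a where a: "a \<in> dom M" "sat M ((\<sigma> \<circ> e)(x := a)) p" by auto
    then obtain b where "b \<in> dom M" "a = \<sigma> b" using onto by auto
    then show "sat M e (FEx x p)" using a ih upd by auto
  next
    assume "sat M e (FEx x p)"
    then obtain b where b: "b \<in> dom M" "sat M (e(x := b)) p" by auto
    then have "\<sigma> b \<in> dom M" using onto by auto
    then show "sat M (\<sigma> \<circ> e) (FEx x p)" using b ih upd by (auto intro!: bexI[of _ "\<sigma> b"])
  qed
qed auto

definition Th :: "lang \<Rightarrow> struc \<Rightarrow> fm set" where
  "Th L M = {p. sentence L p \<and> (\<forall>e. range e \<subseteq> dom M \<longrightarrow> sat M e p)}"

lemma is_model_Th: "is_struc L M \<Longrightarrow> is_model L (Th L M) M"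
  by (auto simp: is_model_def Th_def)

lemma complete_theory_Th:
  assumes "is_struc L M"
  shows "complete_theory L (Th L M)"
  unfolding complete_theory_def
proof (intro conjI allI impI)
  show "\<forall>p\<in>Th L M. sentence L p" by (auto simp: Th_def)
  show "\<exists>N. is_model L (Th L M) N" using is_model_Th[OF assms] by blast
  fix p assume p: "sentence L p"
  show "entails L (Th L M) p \<or> entails L (Th L M) (FNeg p)"
  proof (cases "\<forall>e. range e \<subseteq> dom M \<longrightarrow> sat M e p")
    case True
    then have "p \<in> Th L M" using p by (auto simp: Th_def)
    then show ?thesis by (auto simp: entails_def is_model_def)
  next
    case False
    then obtain e0 where "range e0 \<subseteq> dom M" "\<not> sat M e0 p" by auto
    then have "sat M e (FNeg p)" for e
      using sat_sentence[of p M e e0] p by (auto simp: sentence_def)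
    then have "FNeg p \<in> Th L M" using p by (auto simp: Th_def sentence_def)
    then show ?thesis by (auto simp: entails_def is_model_def)
  qed
qed

lemma Th_sublang: "sublang L L' \<Longrightarrow> Th L M \<subseteq> Th L' M"
  by (auto simp: Th_def sentence_def intro: wf_fm_sublang)

lemma expansion_Th: "sublang L L' \<Longrightarrow> is_struc L' M \<Longrightarrow> expansion L (Th L M) L' (Th L' M)"
  by (simp add: expansion_def Th_sublang complete_theory_Th)

fun close_all :: "nat list \<Rightarrow> fm \<Rightarrow> fm" where
  "close_all [] p = p"
| "close_all (x # xs) p = FNeg (FEx x (FNeg (close_all xs p)))"

lemma fv_close_all: "fv (close_all xs p) = fv p - set xs"
  by (induct xs) auto

lemma wf_fm_close_all: "wf_fm L (close_all xs p) = wf_fm L p"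
  by (induct xs) auto

lemma sat_close_allD: "range e \<subseteq> dom M \<Longrightarrow> sat M e (close_all xs p) \<Longrightarrow> sat M e p"
proof (induct xs arbitrary: e)
  case (Cons x xs)
  have "e x \<in> dom M" using Cons.prems(1) by auto
  then have "sat M (e(x := e x)) (close_all xs p)" using Cons.prems(2) by auto
  then show ?case using Cons by simp
qed simp

lemma sat_close_allI:
  "\<forall>e. range e \<subseteq> dom M \<longrightarrow> sat M e p \<Longrightarrow> range e \<subseteq> dom M \<Longrightarrow> sat M e (close_all xs p)"
proof (induct xs arbitrary: e)
  case (Cons x xs)
  have "sat M (e(x := a)) (close_all xs p)" if "a \<in> dom M" for a
    using Cons that by (intro Cons.hyps) auto
  then show ?case by simp
qed simp

definition FIff :: "fm \<Rightarrow> fm \<Rightarrow> fm" where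
  "FIff p q = FConj (FNeg (FConj p (FNeg q))) (FNeg (FConj q (FNeg p)))"

lemma sat_FIff: "sat M e (FIff p q) = (sat M e p = sat M e q)"
  by (auto simp: FIff_def)

lemma T_equiv_ThI:
  assumes "wf_fm L p" "wf_fm L q" "\<forall>e. range e \<subseteq> dom M \<longrightarrow> sat M e p = sat M e q"
  shows "T_equiv L (Th L M) p q"
proof -
  define \<phi> where "\<phi> = close_all (sorted_list_of_set (fv (FIff p q))) (FIff p q)"
  have "sentence L \<phi>" using assms finite_fv
    by (auto simp: sentence_def \<phi>_def fv_close_all wf_fm_close_all FIff_def)
  moreover have "\<forall>e. range e \<subseteq> dom M \<longrightarrow> sat M e \<phi>"
    unfolding \<phi>_def using assms(3) by (auto intro!: sat_close_allI simp: sat_FIff)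
  ultimately have "\<phi> \<in> Th L M" by (simp add: Th_def)
  then show ?thesis
    unfolding T_equiv_def \<phi>_def using sat_close_allD sat_FIff by (metis is_model_def)
qed

lemma T_equiv_ThD:
  "is_struc L M \<Longrightarrow> T_equiv L (Th L M) p q \<Longrightarrow> range e \<subseteq> dom M \<Longrightarrow> sat M e p = sat M e q"
  using is_model_Th unfolding T_equiv_def by blast

section \<open>Arity through invariance\<close>

definition basic_fms :: "lang \<Rightarrow> nat \<Rightarrow> fm set" where
  "basic_fms L n = {r. wf_fm L r \<and> card (fv r) \<le> n} \<union>
     (if n = 1 then {FEq (Var i) (Var j) | i j. True} else {})"

lemma nary_theory_iff_basic_fms:
  assumes "1 \<le> n"
  shows "nary_theory L T n \<longleftrightarrow>
    (\<forall>p. wf_fm L p \<longrightarrow> (\<exists>q\<in>bool_comb (basic_fms L n). T_equiv L T p q))"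
proof (cases "n = 1")
  case True
  have "basic_fms L n = {r. wf_fm L r \<and> finite (fv r) \<and> card (fv r) \<le> 1}
      \<union> {FEq (Var i) (Var j) | i j. True}"
    using True finite_fv by (auto simp: basic_fms_def)
  then show ?thesis using True by (simp add: nary_theory_def)
next
  case False
  have "basic_fms L n = {r. wf_fm L r \<and> finite (fv r) \<and> card (fv r) \<le> n}"
    using False finite_fv by (auto simp: basic_fms_def)
  then show ?thesis using False assms by (simp add: nary_theory_def nary_fm_def)
qed

lemma basic_fmsI: "wf_fm L r \<Longrightarrow> card (fv r) \<le> n \<Longrightarrow> r \<in> basic_fms L n"
  by (simp add: basic_fms_def)

lemma FEq_Var_basic_fms: "1 \<le> n \<Longrightarrow> FEq (Var u) (Var v) \<in> basic_fms L n"
  by (cases "n = 1") (auto simp: basic_fms_def card_insert_if)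

lemma wf_fm_basic_fms: "r \<in> basic_fms L n \<Longrightarrow> wf_fm L r"
  by (auto simp: basic_fms_def split: if_splits)

lemma wf_fm_bool_comb: "q \<in> bool_comb S \<Longrightarrow> \<forall>r\<in>S. wf_fm L r \<Longrightarrow> wf_fm L q"
  by (induct rule: bool_comb.induct) auto

lemma sat_bool_comb_cong:
  "q \<in> bool_comb S \<Longrightarrow> \<forall>r\<in>S. sat M e1 r = sat M e2 r \<Longrightarrow> sat M e1 q = sat M e2 q"
  by (induct rule: bool_comb.induct) auto

text \<open>The formula \<open>p0\<close> only serves to build the constants.\<close>
lemma bool_comb_truth_function:
  assumes "finite F" "F \<subseteq> S" "p0 \<in> S"
  shows "\<exists>q\<in>bool_comb S. \<forall>e. sat M e q = G (\<lambda>r. r \<in> F \<and> sat M e r)"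
  using assms(1,2)
proof (induct F arbitrary: G rule: finite_induct)
  case empty
  have t: "FNeg (FConj p0 (FNeg p0)) \<in> bool_comb S" "FConj p0 (FNeg p0) \<in> bool_comb S"
    using assms(3) by (auto intro: bool_comb.intros)
  show ?case
  proof (cases "G (\<lambda>_. False)")
    case True
    then show ?thesis using t(1) by (intro bexI[of _ "FNeg (FConj p0 (FNeg p0))"]) auto
  next
    case False
    then show ?thesis using t(2) by (intro bexI[of _ "FConj p0 (FNeg p0)"]) auto
  qed
next
  case (insert f F)
  obtain q1 where q1: "q1 \<in> bool_comb S" "\<forall>e. sat M e q1 = G ((\<lambda>r. r \<in> F \<and> sat M e r)(f := True))"
    using insert(3)[of "\<lambda>h. G (h(f := True))"] insert(4) by auto
  obtain q0 where q0: "q0 \<in> bool_comb S" "\<forall>e. sat M e q0 = G ((\<lambda>r. r \<in> F \<and> sat M e r)(f := False))"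
    using insert(3)[of "\<lambda>h. G (h(f := False))"] insert(4) by auto
  define q where "q = FNeg (FConj (FNeg (FConj f q1)) (FNeg (FConj (FNeg f) q0)))"
  have "f \<in> bool_comb S" using insert(4) by (auto intro: bool_comb.intros)
  then have qS: "q \<in> bool_comb S"
    unfolding q_def using q1(1) q0(1) by (meson bool_comb.neg bool_comb.conj)
  have "sat M e q = G (\<lambda>r. r \<in> insert f F \<and> sat M e r)" for e
  proof -
    have "(\<lambda>r. r \<in> insert f F \<and> sat M e r) = (\<lambda>r. r \<in> F \<and> sat M e r)(f := sat M e f)"
      using insert(2) by (auto simp: fun_eq_iff)
    then show ?thesis unfolding q_def using q1(2) q0(2) by (cases "sat M e f") auto
  qed
  then show ?case using qS by blast
qed

lemma nary_theory_Th_if_determined: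
  assumes "1 \<le> n"
    and determined: "\<And>p. wf_fm L p \<Longrightarrow> \<exists>F. finite F \<and> F \<subseteq> basic_fms L n \<and>
      (\<forall>e1 e2. range e1 \<subseteq> dom M \<longrightarrow> range e2 \<subseteq> dom M \<longrightarrow>
         (\<forall>r\<in>F. sat M e1 r = sat M e2 r) \<longrightarrow> sat M e1 p = sat M e2 p)"
  shows "nary_theory L (Th L M) n"
  unfolding nary_theory_iff_basic_fms[OF assms(1)]
proof (intro allI impI)
  fix p assume p: "wf_fm L p"
  obtain F where F: "finite F" "F \<subseteq> basic_fms L n"
    "\<forall>e1 e2. range e1 \<subseteq> dom M \<longrightarrow> range e2 \<subseteq> dom M \<longrightarrow>
         (\<forall>r\<in>F. sat M e1 r = sat M e2 r) \<longrightarrow> sat M e1 p = sat M e2 p"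
    using determined[OF p] by blast
  \<comment> \<open>\<open>p\<close> is the truth function \<open>G\<close> of the formulas in \<open>F\<close>\<close>
  define G where
    "G h \<longleftrightarrow> (\<exists>e'. range e' \<subseteq> dom M \<and> (\<forall>r\<in>F. h r = sat M e' r) \<and> sat M e' p)" for h
  obtain q where q: "q \<in> bool_comb (basic_fms L n)" "\<forall>e. sat M e q = G (\<lambda>r. r \<in> F \<and> sat M e r)"
    using bool_comb_truth_function[OF F(1,2) FEq_Var_basic_fms[OF assms(1)]] by blast
  have "sat M e p = sat M e q" if e: "range e \<subseteq> dom M" for e
  proof -
    have "G (\<lambda>r. r \<in> F \<and> sat M e r) = sat M e p"
    proof
      assume "G (\<lambda>r. r \<in> F \<and> sat M e r)"
      then obtain e' where "range e' \<subseteq> dom M" "\<forall>r\<in>F. sat M e r = sat M e' r" "sat M e' p"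
        unfolding G_def by auto
      then show "sat M e p" using F(3) e by metis
    qed (use e in \<open>auto simp: G_def\<close>)
    then show ?thesis using q(2) by simp
  qed
  moreover have "wf_fm L q" using wf_fm_bool_comb[OF q(1)] wf_fm_basic_fms by blast
  ultimately have "T_equiv L (Th L M) p q" using p by (intro T_equiv_ThI) auto
  then show "\<exists>q\<in>bool_comb (basic_fms L n). T_equiv L (Th L M) p q" using q(1) by blast
qed

lemma not_nary_theory_Th_if_separated:
  assumes "is_struc L M" "1 \<le> n" "wf_fm L p" "range e1 \<subseteq> dom M" "range e2 \<subseteq> dom M"
    and "sat M e1 p \<noteq> sat M e2 p" "\<forall>r\<in>basic_fms L n. sat M e1 r = sat M e2 r"
  shows "\<not> nary_theory L (Th L M) n"
proof
  assume "nary_theory L (Th L M) n"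
  then obtain q where q: "q \<in> bool_comb (basic_fms L n)" "T_equiv L (Th L M) p q"
    using assms(3) unfolding nary_theory_iff_basic_fms[OF assms(2)] by blast
  have "sat M e1 q = sat M e2 q" using sat_bool_comb_cong[OF q(1) assms(7)] .
  then show False using T_equiv_ThD[OF assms(1) q(2)] assms(4-6) by metis
qed

lemma not_nary_theory_Th_0:
  assumes "is_struc L M" "a \<in> dom M" "b \<in> dom M" "a \<noteq> b"
  shows "\<not> nary_theory L (Th L M) 0"
proof
  assume "nary_theory L (Th L M) 0"
  then have "\<exists>q. sentence L q \<and> T_equiv L (Th L M) (FEq (Var 0) (Var 1)) q"
    unfolding nary_theory_def by simp
  then obtain q where q: "sentence L q" "T_equiv L (Th L M) (FEq (Var 0) (Var 1)) q"
    by blast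
  define e1 where "e1 = (\<lambda>_::nat. a)"
  define e2 where "e2 = (\<lambda>v::nat. if v = 0 then a else b)"
  have "range e1 \<subseteq> dom M" "range e2 \<subseteq> dom M" using assms by (auto simp: e1_def e2_def)
  moreover have "sat M e1 q = sat M e2 q" using q(1) sat_sentence by (auto simp: sentence_def)
  moreover have "sat M e1 (FEq (Var 0) (Var 1))" "\<not> sat M e2 (FEq (Var 0) (Var 1))"
    using assms(4) by (auto simp: e1_def e2_def)
  ultimately show False using T_equiv_ThD[OF assms(1) q(2)] by metis
qed

section \<open>Blocks and their orientation\<close>

text \<open>Elements are coded as pairs (block, position); the universe omits the blocks 0 and 1.\<close>
definition blk :: "nat \<Rightarrow> nat" where "blk x = fst (prod_decode x)"
definition pos :: "nat \<Rightarrow> nat" where "pos x = snd (prod_decode x)"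
definition block_ar :: "nat \<Rightarrow> nat" where "block_ar b = b div 2"

definition block :: "nat \<Rightarrow> nat list" where
  "block b = map (\<lambda>i. prod_encode (b, i)) [0..<Suc (block_ar b)]"

definition Univ :: "nat set" where "Univ = {x. 2 \<le> blk x \<and> pos x \<le> block_ar (blk x)}"

lemma blk_encode [simp]: "blk (prod_encode (b, i)) = b"
  by (simp add: blk_def)

lemma pos_encode [simp]: "pos (prod_encode (b, i)) = i"
  by (simp add: pos_def)

lemma encode_blk_pos: "prod_encode (blk x, pos x) = x"
  by (simp add: blk_def pos_def)

lemma set_block: "set (block b) = (\<lambda>i. prod_encode (b, i)) ` {0..<Suc (block_ar b)}"
  by (simp add: block_def del: upt_Suc)

lemma mem_block: "x \<in> set (block b) \<longleftrightarrow> blk x = b \<and> pos x \<le> block_ar b"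
proof
  assume "blk x = b \<and> pos x \<le> block_ar b"
  moreover have "x = prod_encode (blk x, pos x)" by (simp add: encode_blk_pos)
  ultimately show "x \<in> set (block b)" unfolding set_block by (auto simp: image_iff)
qed (auto simp: set_block)

lemma length_block [simp]: "length (block b) = Suc (block_ar b)"
  by (simp add: block_def)

lemma nth_block: "i \<le> block_ar b \<Longrightarrow> block b ! i = prod_encode (b, i)"
  by (simp add: block_def del: upt_Suc)

lemma distinct_block: "distinct (block b)"
  by (simp add: block_def distinct_map inj_on_def del: upt_Suc)

lemma card_block: "card (set (block b)) = Suc (block_ar b)"
  using distinct_card[OF distinct_block] by simp

lemma block_pos_inj: "x \<in> set (block b) \<Longrightarrow> y \<in> set (block b) \<Longrightarrow> pos x = pos y \<Longrightarrow> x = y"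
  by (metis encode_blk_pos mem_block)

lemma nth_pos_block: "x \<in> set (block b) \<Longrightarrow> block b ! pos x = x"
  by (metis encode_blk_pos mem_block nth_block)

lemma set_block_Univ: "2 \<le> b \<Longrightarrow> set (block b) \<subseteq> Univ"
  by (auto simp: Univ_def mem_block)

lemma Univ_iff: "x \<in> Univ \<longleftrightarrow> 2 \<le> blk x \<and> x \<in> set (block (blk x))"
  by (auto simp: Univ_def mem_block)

lemma blocks_disjoint: "b \<noteq> b' \<Longrightarrow> set (block b) \<inter> set (block b') = {}"
  by (auto simp: mem_block)

lemma encode_2_in_Univ: "prod_encode (2, 0) \<in> Univ" "prod_encode (2, 1) \<in> Univ"
  by (simp_all add: Univ_def block_ar_def)

definition block_tuple :: "nat \<Rightarrow> nat list \<Rightarrow> bool" where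
  "block_tuple b xs \<longleftrightarrow> length xs = block_ar b \<and> distinct xs \<and> set xs \<subseteq> set (block b)"

definition missing :: "nat \<Rightarrow> nat list \<Rightarrow> nat" where
  "missing b xs = (THE m. m \<in> set (block b) \<and> m \<notin> set xs)"

definition tuple_perm :: "nat \<Rightarrow> nat list \<Rightarrow> nat \<Rightarrow> nat" where
  "tuple_perm b xs y =
     (if y \<in> set (block b) then (if pos y < length xs then xs ! pos y else missing b xs) else y)"

definition oriented :: "nat \<Rightarrow> nat list \<Rightarrow> bool" where
  "oriented b xs \<longleftrightarrow> block_tuple b xs \<and> evenperm (tuple_perm b xs)"

lemma missing_ex1:
  assumes "block_tuple b xs"
  shows "\<exists>!m. m \<in> set (block b) \<and> m \<notin> set xs"
proof -
  have "card (set xs) = block_ar b" using assms distinct_card by (metis block_tuple_def)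
  then have "card (set (block b) - set xs) = 1"
    using assms card_block by (simp add: block_tuple_def card_Diff_subset)
  then obtain m where "set (block b) - set xs = {m}" by (meson card_1_singletonE)
  then show ?thesis by (intro ex1I[of _ m]) auto
qed

lemma missing_in_block: "block_tuple b xs \<Longrightarrow> missing b xs \<in> set (block b)"
  using theI'[OF missing_ex1] by (auto simp: missing_def)

lemma missing_notin_tuple: "block_tuple b xs \<Longrightarrow> missing b xs \<notin> set xs"
  using theI'[OF missing_ex1] by (auto simp: missing_def)

lemma missing_unique:
  assumes "block_tuple b xs" "m \<in> set (block b)" "m \<notin> set xs"
  shows "missing b xs = m"
  unfolding missing_def using the1_equality[OF missing_ex1[OF assms(1)]] assms(2,3) by auto

lemma tuple_perm_permutes:
  assumes t: "block_tuple b xs"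
  shows "tuple_perm b xs permutes set (block b)"
proof (rule inj_imp_permutes)
  have len: "length xs = block_ar b" and dx: "distinct xs" and sx: "set xs \<subseteq> set (block b)"
    using t by (auto simp: block_tuple_def)
  have xs_missing: "xs ! i \<noteq> missing b xs" if "i < length xs" for i
    using missing_notin_tuple[OF t] that by (metis nth_mem)
  show "inj_on (tuple_perm b xs) (set (block b))"
  proof (rule inj_onI)
    fix y1 y2 assume y: "y1 \<in> set (block b)" "y2 \<in> set (block b)"
      "tuple_perm b xs y1 = tuple_perm b xs y2"
    have p: "pos y1 \<le> block_ar b" "pos y2 \<le> block_ar b" using y by (auto simp: mem_block)
    have "pos y1 = pos y2"
    proof (cases "pos y1 < length xs"; cases "pos y2 < length xs")
      assume "pos y1 < length xs" "pos y2 < length xs"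
      then show ?thesis using y(1-3) nth_eq_iff_index_eq[OF dx] by (simp add: tuple_perm_def)
    next
      assume "pos y1 < length xs" "\<not> pos y2 < length xs"
      then show ?thesis using y(1-3) xs_missing[of "pos y1"] by (simp add: tuple_perm_def)
    next
      assume "\<not> pos y1 < length xs" "pos y2 < length xs"
      then show ?thesis using y(1-3) xs_missing[of "pos y2"] by (simp add: tuple_perm_def)
    next
      assume "\<not> pos y1 < length xs" "\<not> pos y2 < length xs"
      then show ?thesis using p len by simp
    qed
    then show "y1 = y2" using block_pos_inj y by blast
  qed
  show "tuple_perm b xs x \<in> set (block b)" if "x \<in> set (block b)" for x
    using that sx missing_in_block[OF t] by (auto simp: tuple_perm_def)
  show "tuple_perm b xs x = x" if "x \<notin> set (block b)" for x
    using that by (simp add: tuple_perm_def)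
qed simp

lemma block_tuple_map:
  assumes "\<sigma> permutes set (block b)"
  shows "block_tuple b (map \<sigma> xs) = block_tuple b xs"
proof -
  have "set (map \<sigma> xs) \<subseteq> set (block b) \<longleftrightarrow> set xs \<subseteq> set (block b)"
    using permutes_in_image[OF assms] by auto
  moreover have "distinct (map \<sigma> xs) = distinct xs"
    using permutes_inj[OF assms] by (simp add: distinct_map inj_on_def)
  ultimately show ?thesis by (simp add: block_tuple_def)
qed

lemma tuple_perm_map:
  assumes s: "\<sigma> permutes set (block b)" and t: "block_tuple b xs"
  shows "tuple_perm b (map \<sigma> xs) = \<sigma> \<circ> tuple_perm b xs"
proof
  fix y
  have "missing b (map \<sigma> xs) = \<sigma> (missing b xs)"
  proof (rule missing_unique)
    show "block_tuple b (map \<sigma> xs)" using block_tuple_map[OF s] t by simp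
    show "\<sigma> (missing b xs) \<in> set (block b)"
      using permutes_in_image[OF s] missing_in_block[OF t] by simp
    show "\<sigma> (missing b xs) \<notin> set (map \<sigma> xs)"
      using missing_notin_tuple[OF t] permutes_inj[OF s] by (auto simp: inj_eq)
  qed
  then show "tuple_perm b (map \<sigma> xs) y = (\<sigma> \<circ> tuple_perm b xs) y"
    using permutes_not_in[OF s, of y] by (auto simp: tuple_perm_def)
qed

lemma oriented_map:
  assumes s: "\<sigma> permutes set (block b)" and t: "block_tuple b xs"
  shows "oriented b (map \<sigma> xs) = (evenperm \<sigma> = oriented b xs)"
proof -
  have "permutation \<sigma>" "permutation (tuple_perm b xs)"
    using s tuple_perm_permutes[OF t] by (auto intro: permutes_imp_permutation)
  then show ?thesis
    using evenperm_comp tuple_perm_map[OF s t] block_tuple_map[OF s] t by (simp add: oriented_def)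
qed

lemma oriented_map_local:
  assumes mem: "\<forall>x\<in>set xs. \<sigma> x \<in> set (block b) \<longleftrightarrow> x \<in> set (block b)"
    and \<pi>: "\<pi> permutes set (block b)" "evenperm \<pi>" "\<forall>x\<in>set (block b). \<sigma> x = \<pi> x"
  shows "oriented b (map \<sigma> xs) = oriented b xs"
proof (cases "set xs \<subseteq> set (block b)")
  case True
  then have "map \<sigma> xs = map \<pi> xs" using \<pi>(3) by (induct xs) auto
  moreover have "oriented b (map \<pi> xs) = oriented b xs"
    using oriented_map[OF \<pi>(1)] \<pi>(2) block_tuple_map[OF \<pi>(1)]
    by (cases "block_tuple b xs") (auto simp: oriented_def)
  ultimately show ?thesis by metis
next
  case False
  then have "\<not> set (map \<sigma> xs) \<subseteq> set (block b)" using mem by auto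
  then show ?thesis using False by (simp add: oriented_def block_tuple_def)
qed

lemma oriented_take_block: "oriented b (take (block_ar b) (block b))"
proof -
  let ?xs = "take (block_ar b) (block b)"
  have t: "block_tuple b ?xs"
    using distinct_block by (auto simp: block_tuple_def dest: in_set_takeD)
  have "tuple_perm b ?xs y = y" for y
  proof (cases "y \<in> set (block b)")
    case True
    show ?thesis
    proof (cases "pos y < block_ar b")
      case True2: True
      then show ?thesis using True nth_pos_block[OF True] by (simp add: tuple_perm_def)
    next
      case False
      then have py: "pos y = block_ar b" using True by (simp add: mem_block)
      have "y \<notin> set ?xs"
      proof
        assume "y \<in> set ?xs"
        then obtain i where i: "i < block_ar b" "block b ! i = y" by (auto simp: in_set_conv_nth)
        then have "pos y = i" by (metis less_imp_le nth_block pos_encode)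
        then show False using py i(1) by simp
      qed
      then have "missing b ?xs = y" using missing_unique[OF t True] by simp
      then show ?thesis using True False by (simp add: tuple_perm_def)
    qed
  qed (simp add: tuple_perm_def)
  then have "tuple_perm b ?xs = id" by auto
  then show ?thesis using t by (simp add: oriented_def)
qed

section \<open>Extending partial maps to permutations\<close>

lemma extend_colour_preserving_bij:
  fixes f :: "'a \<Rightarrow> 'a" and C :: "'a \<Rightarrow> 'c"
  assumes "finite A" "inj_on f A" "\<forall>a\<in>A. C (f a) = C a"
  shows "\<exists>\<sigma>. bij \<sigma> \<and> (\<forall>x. C (\<sigma> x) = C x) \<and> (\<forall>a\<in>A. \<sigma> a = f a)"
  using assms
proof (induct A rule: finite_induct)
  case empty
  show ?case by (rule exI[of _ id]) (metis bij_id empty_iff id_apply)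
next
  case (insert a A)
  then obtain \<sigma> where \<sigma>: "bij \<sigma>" "\<forall>x. C (\<sigma> x) = C x" "\<forall>a\<in>A. \<sigma> a = f a"
    by (auto simp: inj_on_insert)
  define c where "c = \<sigma> a"
  define d where "d = f a"
  have Ccd: "C d = C c" using insert \<sigma> by (simp add: c_def d_def)
  define \<sigma>' where "\<sigma>' = transpose d c \<circ> \<sigma>"
  have "bij \<sigma>'" unfolding \<sigma>'_def using \<sigma>(1) by (simp add: bij_comp)
  moreover have "C (transpose d c y) = C y" for y
    using Ccd by (cases "y = d"; cases "y = c") auto
  then have "\<forall>x. C (\<sigma>' x) = C x" using \<sigma>(2) by (simp add: \<sigma>'_def)
  moreover have "\<sigma>' a = f a" by (simp add: \<sigma>'_def c_def d_def)
  moreover have "\<sigma>' a' = f a'" if "a' \<in> A" for a'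
  proof -
    have ne: "a' \<noteq> a" using that insert(2) by auto
    have "f a' \<noteq> d" using insert(4) that ne insert(2) by (auto simp: d_def inj_on_def)
    moreover have "f a' \<noteq> c" using \<sigma>(3) that ne bij_is_inj[OF \<sigma>(1)] by (auto simp: c_def inj_eq)
    ultimately show ?thesis using \<sigma>(3) that by (simp add: \<sigma>'_def)
  qed
  ultimately show ?case by auto
qed

lemma extend_to_permutes:
  assumes "finite A" "inj_on f A" "A \<subseteq> S" "f ` A \<subseteq> S"
  obtains \<pi> where "\<pi> permutes S" "\<forall>a\<in>A. \<pi> a = f a"
proof -
  define C where "C x = (if x \<in> S then None else Some x)" for x
  have "\<forall>a\<in>A. C (f a) = C a" using assms(3,4) by (auto simp: C_def)
  then obtain \<pi> where \<pi>: "bij \<pi>" "\<forall>x. C (\<pi> x) = C x" "\<forall>a\<in>A. \<pi> a = f a"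
    using extend_colour_preserving_bij[OF assms(1,2)] by blast
  have "\<pi> x = x" if "x \<notin> S" for x
    using \<pi>(2)[rule_format, of x] that by (auto simp: C_def split: if_splits)
  then have "\<pi> permutes S" using \<pi>(1) unfolding permutes_def bij_iff by blast
  then show ?thesis using \<pi>(3) that by blast
qed

lemma obtain_two_elements:
  assumes "2 \<le> card X"
  obtains u w where "u \<in> X" "w \<in> X" "u \<noteq> w"
proof -
  obtain U where "U \<subseteq> X" "card U = 2" using obtain_subset_with_card_n[OF assms] by blast
  then show ?thesis using that by (auto simp: card_2_iff)
qed

lemma extend_to_even_permutes:
  assumes "finite S" "inj_on f A" "A \<subseteq> S" "f ` A \<subseteq> S" "card A + 2 \<le> card S"
  obtains \<pi> where "\<pi> permutes S" "evenperm \<pi>" "\<forall>a\<in>A. \<pi> a = f a"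
proof -
  have finA: "finite A" using assms(1,3) finite_subset by blast
  obtain \<pi>0 where \<pi>0: "\<pi>0 permutes S" "\<forall>a\<in>A. \<pi>0 a = f a"
    using extend_to_permutes[OF finA assms(2-4)] by blast
  show ?thesis
  proof (cases "evenperm \<pi>0")
    case True
    then show ?thesis using \<pi>0 that by blast
  next
    case False
    have "card (f ` A) \<le> card A" using card_image_le[OF finA] .
    then have "2 \<le> card (S - f ` A)"
      using assms(1,4,5) by (simp add: card_Diff_subset finite_subset[OF assms(4)])
    then obtain u w where uw: "u \<in> S - f ` A" "w \<in> S - f ` A" "u \<noteq> w"
      by (rule obtain_two_elements)
    define \<pi> where "\<pi> = transpose u w \<circ> \<pi>0"
    have "\<pi> permutes S" unfolding \<pi>_def using permutes_compose[OF \<pi>0(1) permutes_swap_id] uw by auto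
    moreover have "evenperm \<pi>"
      unfolding \<pi>_def
      using evenperm_comp[OF permutation_swap_id permutes_imp_permutation[OF assms(1) \<pi>0(1)]]
        False uw(3) by (simp add: evenperm_swap)
    moreover have "\<pi> a = f a" if "a \<in> A" for a
    proof -
      have "\<pi>0 a = f a" "f a \<noteq> u" "f a \<noteq> w" using \<pi>0(2) uw that by auto
      then show ?thesis by (simp add: \<pi>_def)
    qed
    ultimately show ?thesis using that by blast
  qed
qed

lemma extend_colour_preserving_bij_classes:
  fixes f :: "'a \<Rightarrow> 'a" and C :: "'a \<Rightarrow> 'c"
  assumes A: "finite A" "inj_on f A" "\<forall>a\<in>A. C (f a) = C a"
    and K: "finite K" "\<forall>k\<in>K. finite {x. C x = k}" "\<forall>k\<in>K. \<pi> k permutes {x. C x = k}"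
    and agree: "\<forall>a\<in>A. C a \<in> K \<longrightarrow> \<pi> (C a) a = f a"
  obtains \<sigma> where "bij \<sigma>" "\<forall>x. C (\<sigma> x) = C x" "\<forall>a\<in>A. \<sigma> a = f a"
    "\<forall>x. C x \<in> K \<longrightarrow> \<sigma> x = \<pi> (C x) x"
proof -
  define A' where "A' = A \<union> {x. C x \<in> K}"
  define f' where "f' x = (if C x \<in> K then \<pi> (C x) x else f x)" for x
  have "{x. C x \<in> K} = (\<Union>k\<in>K. {x. C x = k})" by auto
  then have fin: "finite A'" using A(1) K(1,2) by (simp add: A'_def)
  have in_class: "C (\<pi> k x) = k" if "k \<in> K" "C x = k" for k x
    using permutes_in_image[OF K(3)[rule_format, OF that(1)], of x] that(2) by simp
  have colour: "C (f' x) = C x" if "x \<in> A'" for x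
    using that A(3) in_class by (auto simp: A'_def f'_def)
  have "inj_on f' A'"
  proof (rule inj_onI)
    fix x y assume xy: "x \<in> A'" "y \<in> A'" "f' x = f' y"
    then have Cxy: "C x = C y" using colour by metis
    show "x = y"
    proof (cases "C x \<in> K")
      case True
      then show ?thesis
        using xy(3) Cxy permutes_inj[OF K(3)[rule_format, OF True]] by (simp add: f'_def inj_eq)
    next
      case False
      then show ?thesis using xy Cxy A(2) by (auto simp: A'_def f'_def inj_on_def)
    qed
  qed
  then obtain \<sigma> where \<sigma>: "bij \<sigma>" "\<forall>x. C (\<sigma> x) = C x" "\<forall>a\<in>A'. \<sigma> a = f' a"
    using extend_colour_preserving_bij[OF fin] colour by blast
  show ?thesis
  proof (rule that[OF \<sigma>(1,2)])
    show "\<forall>a\<in>A. \<sigma> a = f a" using \<sigma>(3) agree by (auto simp: A'_def f'_def)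
    show "\<forall>x. C x \<in> K \<longrightarrow> \<sigma> x = \<pi> (C x) x" using \<sigma>(3) by (auto simp: A'_def f'_def)
  qed
qed

text \<open>If \<open>f\<close> is defined on at least \<open>block_ar b\<close> points, every permutation extending it has the
  parity that \<open>f\<close> imposes on the orientation of these points; otherwise the two free points
  allow correcting the parity.\<close>
lemma oriented_even_extension:
  assumes f: "inj_on f A" "A \<subseteq> set (block b)" "f ` A \<subseteq> set (block b)"
    and orient: "\<forall>xs. block_tuple b xs \<and> set xs \<subseteq> A \<longrightarrow> oriented b (map f xs) = oriented b xs"
  obtains \<pi> where "\<pi> permutes set (block b)" "evenperm \<pi>" "\<forall>a\<in>A. \<pi> a = f a"
proof (cases "card A < block_ar b")
  case True
  then have "card A + 2 \<le> card (set (block b))" using card_block by simp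
  then obtain \<pi> where "\<pi> permutes set (block b)" "evenperm \<pi>" "\<forall>a\<in>A. \<pi> a = f a"
    using extend_to_even_permutes[OF finite_set f] by blast
  then show ?thesis by (rule that)
next
  case False
  have finA: "finite A" using f(2) finite_subset by blast
  obtain \<pi> where \<pi>: "\<pi> permutes set (block b)" "\<forall>a\<in>A. \<pi> a = f a"
    using extend_to_permutes[OF finA f] by blast
  have "block_ar b \<le> card A" using False by simp
  then obtain B where B: "B \<subseteq> A" "card B = block_ar b" by (rule obtain_subset_with_card_n)
  define xs where "xs = sorted_list_of_set B"
  have xs: "block_tuple b xs" "set xs \<subseteq> A"
    using B f(2) finite_subset[OF B(1) finA] by (auto simp: xs_def block_tuple_def)
  have "map \<pi> xs = map f xs" using \<pi>(2) xs(2) by auto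
  then have "oriented b (map \<pi> xs) = oriented b xs" using orient xs by metis
  then have "evenperm \<pi>" using oriented_map[OF \<pi>(1) xs(1)] by (cases "oriented b xs") auto
  then show ?thesis using that \<pi> by blast
qed

section \<open>The block structure\<close>

definition sym_block :: "nat \<Rightarrow> nat" where
  "sym_block r =
     (if r mod 4 = 3 then blk (r div 4)
      else if r mod 4 = 2 then 2 * (r div 4) + 1 else 2 * (r div 4))"

text \<open>Symbol \<open>4k\<close> is the orientation of block \<open>2k\<close>, \<open>4k + 1\<close> the unary predicate of block \<open>2k\<close>,
  \<open>4k + 2\<close> the orientation of block \<open>2k + 1\<close>, and \<open>4a + 3\<close> names the element \<open>a\<close>; in each case
  \<open>sym_block\<close> is the block the symbol refers to.\<close>
definition relM :: "nat \<Rightarrow> nat list \<Rightarrow> bool" where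
  "relM r xs = (if r mod 4 = 3 then xs = [r div 4]
     else if r mod 4 = 1 then (\<exists>x. xs = [x] \<and> x \<in> set (block (sym_block r)))
     else oriented (sym_block r) xs)"

definition block_struc :: struc where
  "block_struc = \<lparr>dom = Univ, fnI = (\<lambda>_ _. 0), relI = relM\<rparr>"

lemma block_struc_simps [simp]: "dom block_struc = Univ" "relI block_struc = relM"
  by (simp_all add: block_struc_def)

lemma is_struc_block_struc: "fsyms L = {} \<Longrightarrow> is_struc L block_struc"
  using encode_2_in_Univ by (auto simp: is_struc_def)

lemma mod_4_simps [simp]:
  "(4 * k) mod 4 = (0::nat)" "(4 * k) div 4 = (k::nat)"
  "(4 * k + 1) mod 4 = (1::nat)" "(4 * k + 1) div 4 = (k::nat)"
  "(4 * k + 2) mod 4 = (2::nat)" "(4 * k + 2) div 4 = (k::nat)"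
  "(4 * k + 3) mod 4 = (3::nat)" "(4 * k + 3) div 4 = (k::nat)"
  "Suc (4 * k) mod 4 = (1::nat)" "Suc (4 * k) div 4 = (k::nat)"
  "Suc (Suc (4 * k)) mod 4 = (2::nat)" "Suc (Suc (4 * k)) div 4 = (k::nat)"
  "Suc (Suc (Suc (4 * k))) mod 4 = (3::nat)" "Suc (Suc (Suc (4 * k))) div 4 = (k::nat)"
  by presburger+

lemma relM_orient_even: "relM (4 * k) = oriented (2 * k)"
  by (simp add: relM_def sym_block_def fun_eq_iff)

lemma relM_orient_odd: "relM (4 * k + 2) = oriented (2 * k + 1)"
  by (simp add: relM_def sym_block_def fun_eq_iff)

lemma relM_pred: "relM (4 * k + 1) xs \<longleftrightarrow> (\<exists>x. xs = [x] \<and> x \<in> set (block (2 * k)))"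
  by (simp add: relM_def sym_block_def)

lemma relM_name: "relM (4 * a + 3) xs \<longleftrightarrow> xs = [a]"
  by (simp add: relM_def)

lemma relM_map_invariant:
  assumes block: "r mod 4 \<noteq> 3 \<Longrightarrow>
      \<forall>x. \<sigma> x \<in> set (block (sym_block r)) \<longleftrightarrow> x \<in> set (block (sym_block r))"
    and even: "r mod 4 = 0 \<or> r mod 4 = 2 \<Longrightarrow> \<exists>\<pi>. \<pi> permutes set (block (sym_block r)) \<and>
      evenperm \<pi> \<and> (\<forall>x\<in>set (block (sym_block r)). \<sigma> x = \<pi> x)"
    and name: "r mod 4 = 3 \<Longrightarrow> \<forall>x. \<sigma> x = r div 4 \<longleftrightarrow> x = r div 4"
  shows "relM r (map \<sigma> xs) = relM r xs"
proof -
  have single: "map \<sigma> xs = [y] \<longleftrightarrow> (\<exists>x. xs = [x] \<and> \<sigma> x = y)" for y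
    by (cases xs) auto
  consider "r mod 4 = 3" | "r mod 4 = 1" | "r mod 4 = 0 \<or> r mod 4 = 2" by linarith
  then show ?thesis
  proof cases
    case 1
    then show ?thesis using name single by (auto simp: relM_def)
  next
    case 2
    then show ?thesis using block single by (auto simp: relM_def)
  next
    case 3
    then obtain \<pi> where "\<pi> permutes set (block (sym_block r))" "evenperm \<pi>"
      "\<forall>x\<in>set (block (sym_block r)). \<sigma> x = \<pi> x"
      using even[OF 3] by blast
    then have "oriented (sym_block r) (map \<sigma> xs) = oriented (sym_block r) xs"
      using block 3 by (intro oriented_map_local) auto
    then show ?thesis using 3 by (auto simp: relM_def)
  qed
qed

lemma sat_even_block_perm:
  assumes L: "fsyms L = {}" "wf_fm L p"
    and unnamed: "\<forall>(r, k)\<in>rsyms L. r mod 4 = 3 \<longrightarrow> r div 4 \<notin> set (block b)"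
    and \<sigma>: "\<sigma> permutes set (block b)" "evenperm \<sigma>" and "2 \<le> b" "range e \<subseteq> Univ"
  shows "sat block_struc (\<sigma> \<circ> e) p = sat block_struc e p"
proof -
  have bij: "bij_betw \<sigma> Univ Univ"
    using permutes_imp_bij[OF permutes_subset[OF \<sigma>(1) set_block_Univ[OF \<open>2 \<le> b\<close>]]] .
  have mem: "\<sigma> x \<in> set (block b') \<longleftrightarrow> x \<in> set (block b')" for x b'
  proof (cases "b' = b \<or> x \<in> set (block b)")
    case True
    then show ?thesis using permutes_in_image[OF \<sigma>(1)] blocks_disjoint[of b b'] by auto
  next
    case False
    then show ?thesis using permutes_not_in[OF \<sigma>(1)] by simp
  qed
  have "preserves_rels block_struc (rels p) \<sigma>"
    unfolding preserves_rels_def block_struc_simps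
  proof (intro ballI allI impI, rule relM_map_invariant)
    fix r xs assume "r \<in> rels p"
    then obtain k where "(r, k) \<in> rsyms L" using wf_fm_rels[OF L(2)] by blast
    then have a: "r mod 4 = 3 \<Longrightarrow> r div 4 \<notin> set (block b)" using unnamed by auto
    show "\<forall>x. \<sigma> x \<in> set (block (sym_block r)) \<longleftrightarrow> x \<in> set (block (sym_block r))"
      using mem by blast
    show "\<exists>\<pi>. \<pi> permutes set (block (sym_block r)) \<and> evenperm \<pi> \<and>
        (\<forall>x\<in>set (block (sym_block r)). \<sigma> x = \<pi> x)"
    proof (cases "sym_block r = b")
      case False
      then have "\<forall>x\<in>set (block (sym_block r)). \<sigma> x = id x"
        using blocks_disjoint[of b "sym_block r"] permutes_not_in[OF \<sigma>(1)] by auto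
      then show ?thesis using permutes_id evenperm_id by blast
    qed (use \<sigma> in auto)
    show "\<forall>x. \<sigma> x = r div 4 \<longleftrightarrow> x = r div 4" if "r mod 4 = 3"
      using a[OF that] permutes_in_image[OF \<sigma>(1)] permutes_not_in[OF \<sigma>(1)] by metis
  qed
  then show ?thesis using sat_automorphism[OF L] bij assms(7) by simp
qed

text \<open>An odd permutation is made even by a transposition of two elements of the block outside
  the range of the free variables.\<close>
lemma sat_block_perm_few_vars:
  assumes L: "fsyms L = {}" "wf_fm L p"
    and unnamed: "\<forall>(r, k)\<in>rsyms L. r mod 4 = 3 \<longrightarrow> r div 4 \<notin> set (block b)"
    and \<tau>: "\<tau> permutes set (block b)" and "2 \<le> b" "range e \<subseteq> Univ"
    and few: "card (fv p) < block_ar b"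
  shows "sat block_struc (\<tau> \<circ> e) p = sat block_struc e p"
proof (cases "evenperm \<tau>")
  case True
  then show ?thesis using sat_even_block_perm[OF L unnamed \<tau>] assms(5,6) by blast
next
  case False
  have "card (e ` fv p) < block_ar b" using card_image_le[OF finite_fv] few le_less_trans by blast
  moreover have "card (set (block b)) - card (e ` fv p) \<le> card (set (block b) - e ` fv p)"
    using finite_fv by (intro diff_card_le_card_Diff) simp
  ultimately have "2 \<le> card (set (block b) - e ` fv p)" using card_block[of b] by linarith
  then obtain u w where uw: "u \<in> set (block b)" "w \<in> set (block b)" "u \<noteq> w"
    "u \<notin> e ` fv p" "w \<notin> e ` fv p"
    by (rule obtain_two_elements) blast
  define \<sigma> where "\<sigma> = \<tau> \<circ> transpose u w"
  have \<sigma>: "\<sigma> permutes set (block b)"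
    unfolding \<sigma>_def by (rule permutes_compose[OF permutes_swap_id \<tau>]) (use uw in auto)
  have "evenperm \<sigma>"
    unfolding \<sigma>_def
    using evenperm_comp[OF permutes_imp_permutation[OF finite_set \<tau>] permutation_swap_id]
      False uw(3) by (simp add: evenperm_swap)
  then have "sat block_struc (\<sigma> \<circ> e) p = sat block_struc e p"
    using sat_even_block_perm[OF L unnamed \<sigma>] assms(5,6) by blast
  moreover have "\<sigma> (e v) = \<tau> (e v)" if "v \<in> fv p" for v
  proof -
    have "e v \<noteq> u" "e v \<noteq> w" using uw(4,5) that by auto
    then show ?thesis by (simp add: \<sigma>_def)
  qed
  then have "sat block_struc (\<sigma> \<circ> e) p = sat block_struc (\<tau> \<circ> e) p"
    by (intro sat_cong) simp
  ultimately show ?thesis by simp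
qed

text \<open>The first \<open>n + 1\<close> elements of a block of arity \<open>n + 1\<close> are oriented, their image under a
  transposition is not, and formulas with at most \<open>n\<close> free variables do not tell them apart.\<close>
lemma not_nary_theory_Th_orientation:
  assumes L: "fsyms L = {}" "(r, Suc n) \<in> rsyms L" "relM r = oriented b"
    and unnamed: "\<forall>(r, k)\<in>rsyms L. r mod 4 = 3 \<longrightarrow> r div 4 \<notin> set (block b)"
    and b: "block_ar b = Suc n" "2 \<le> b" and "1 \<le> n"
  shows "\<not> nary_theory L (Th L block_struc) n"
proof -
  define z where "z = prod_encode (Suc b, 0)"
  define e1 where "e1 v = (if v < Suc n then block b ! v else z)" for v
  define \<tau> where "\<tau> = transpose (block b ! 0) (block b ! 1)"
  define e2 where "e2 = \<tau> \<circ> e1"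
  have nth_in: "block b ! i \<in> set (block b)" if "i \<le> Suc n" for i
    using that b(1) by simp
  have \<tau>: "\<tau> permutes set (block b)" "\<not> evenperm \<tau>"
    using nth_in[of 0] nth_in[of 1] nth_eq_iff_index_eq[OF distinct_block, of 0 b 1] b(1)
    by (auto simp: \<tau>_def evenperm_swap intro: permutes_swap_id)
  have "z \<in> Univ" using b(2) by (simp add: z_def Univ_def)
  then have e1: "range e1 \<subseteq> Univ"
    using nth_in set_block_Univ[OF b(2)] by (auto simp: e1_def)
  then have e2: "range e2 \<subseteq> Univ"
    using permutes_subset[OF \<tau>(1) set_block_Univ[OF b(2)]] permutes_in_image
    by (fastforce simp: e2_def)
  have take: "map e1 [0..<Suc n] = take (block_ar b) (block b)"
    using b(1) by (intro nth_equalityI) (auto simp: e1_def simp del: upt_Suc)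
  have "block_tuple b (take (block_ar b) (block b))"
    using oriented_take_block by (simp add: oriented_def)
  then have "oriented b (map e1 [0..<Suc n])" "\<not> oriented b (map \<tau> (map e1 [0..<Suc n]))"
    unfolding take using oriented_take_block oriented_map[OF \<tau>(1)] \<tau>(2) by simp_all
  then have sep: "sat block_struc e1 (FRel r (map Var [0..<Suc n]))"
    "\<not> sat block_struc e2 (FRel r (map Var [0..<Suc n]))"
    by (simp_all only: sat_FRel_Var block_struc_simps L(3) e2_def map_map[symmetric]
        not_False_eq_True)
  have agree: "sat block_struc e1 q = sat block_struc e2 q" if q: "q \<in> basic_fms L n" for q
  proof (cases "wf_fm L q \<and> card (fv q) \<le> n")
    case True
    then show ?thesis
      using sat_block_perm_few_vars[OF L(1) _ unnamed \<tau>(1) b(2) e1] b(1) by (simp add: e2_def)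
  next
    case False
    then obtain i j where "q = FEq (Var i) (Var j)"
      using q by (auto simp: basic_fms_def split: if_splits)
    then show ?thesis using permutes_inj[OF \<tau>(1)] by (simp add: e2_def inj_eq)
  qed
  have "wf_fm L (FRel r (map Var [0..<Suc n]))" using L(2) by simp
  from not_nary_theory_Th_if_separated[OF is_struc_block_struc[OF L(1)] \<open>1 \<le> n\<close> this]
  show ?thesis using e1 e2 sep agree by simp
qed

text \<open>Orientations of the blocks \<open>2k\<close> for \<open>k \<in> KD\<close> and \<open>2k + 1\<close> for \<open>k \<in> KE\<close>, predicates of the
  blocks \<open>2k\<close> for \<open>k \<in> KQ\<close>, and names of all elements of the blocks in \<open>NB\<close>.\<close>
definition block_lang :: "nat set \<Rightarrow> nat set \<Rightarrow> nat set \<Rightarrow> nat set \<Rightarrow> lang" where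
  "block_lang KD KQ KE NB = \<lparr>fsyms = {}, rsyms = {(r, k).
     r mod 4 = 0 \<and> r div 4 \<in> KD \<and> k = r div 4 \<or> r mod 4 = 1 \<and> r div 4 \<in> KQ \<and> k = 1 \<or>
     r mod 4 = 2 \<and> r div 4 \<in> KE \<and> k = r div 4 \<or>
     r mod 4 = 3 \<and> r div 4 \<in> Univ \<and> blk (r div 4) \<in> NB \<and> k = 1}\<rparr>"

lemma fsyms_block_lang [simp]: "fsyms (block_lang KD KQ KE NB) = {}"
  by (simp add: block_lang_def)

lemma rsyms_block_lang: "(r, k) \<in> rsyms (block_lang KD KQ KE NB) \<longleftrightarrow>
    r mod 4 = 0 \<and> r div 4 \<in> KD \<and> k = r div 4 \<or> r mod 4 = 1 \<and> r div 4 \<in> KQ \<and> k = 1 \<or>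
    r mod 4 = 2 \<and> r div 4 \<in> KE \<and> k = r div 4 \<or>
    r mod 4 = 3 \<and> r div 4 \<in> Univ \<and> blk (r div 4) \<in> NB \<and> k = 1"
  by (simp add: block_lang_def)

lemma block_lang_unnamed:
  "b \<notin> NB \<Longrightarrow> \<forall>(r, k)\<in>rsyms (block_lang KD KQ KE NB). r mod 4 = 3 \<longrightarrow> r div 4 \<notin> set (block b)"
  by (auto simp: rsyms_block_lang mem_block)

lemma sym_block_ge_2:
  "(r, k) \<in> rsyms (block_lang KD KQ KE NB) \<Longrightarrow> 0 \<notin> KD \<union> KQ \<union> KE \<Longrightarrow> 2 \<le> sym_block r"
  by (auto simp: rsyms_block_lang sym_block_def Univ_def Suc_le_eq intro!: gr0I)

lemma sym_block_unnamed:
  assumes "(r, k) \<in> rsyms (block_lang KD KQ KE NB)" "sym_block r \<notin> NB"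
    and "\<forall>k\<in>KD. 2 * k \<in> NB \<or> (k \<in> KQ \<and> k \<le> n)" "\<forall>k\<in>KE. 2 * k + 1 \<in> NB"
  shows "sym_block r = 2 * (r div 4) \<and> r div 4 \<in> KQ \<and> (r div 4 \<in> KD \<longrightarrow> r div 4 \<le> n)"
  using assms by (auto simp: rsyms_block_lang sym_block_def)

lemma not_nary_theory_Th_block_lang_0:
  "\<not> nary_theory (block_lang KD KQ KE NB) (Th (block_lang KD KQ KE NB) block_struc) 0"
  using not_nary_theory_Th_0[OF is_struc_block_struc[OF fsyms_block_lang]] encode_2_in_Univ
  by (metis block_struc_simps(1) pos_encode zero_neq_one)

lemma not_nary_theory_Th_block_lang_even:
  assumes "Suc n \<in> KD" "2 * Suc n \<notin> NB" "1 \<le> n"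
  shows "\<not> nary_theory (block_lang KD KQ KE NB) (Th (block_lang KD KQ KE NB) block_struc) n"
  by (rule not_nary_theory_Th_orientation[where r = "4 * Suc n" and b = "2 * Suc n"])
    (use assms block_lang_unnamed relM_orient_even[of "Suc n"] in
      \<open>auto simp: rsyms_block_lang block_ar_def\<close>)

lemma not_nary_theory_Th_block_lang_odd:
  assumes "Suc n \<in> KE" "2 * Suc n + 1 \<notin> NB" "1 \<le> n"
  shows "\<not> nary_theory (block_lang KD KQ KE NB) (Th (block_lang KD KQ KE NB) block_struc) n"
  by (rule not_nary_theory_Th_orientation[where r = "4 * Suc n + 2" and b = "2 * Suc n + 1"])
    (use assms block_lang_unnamed relM_orient_odd[of "Suc n"] in
      \<open>auto simp: rsyms_block_lang block_ar_def\<close>)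

section \<open>Automorphisms of the block structure\<close>

text \<open>A bijection preserving \<open>colour BN BQ\<close> fixes the blocks in \<open>BN\<close> pointwise, maps each block in
  \<open>BQ\<close> onto itself and maps \<open>Univ\<close> onto itself.\<close>
definition colour :: "nat set \<Rightarrow> nat set \<Rightarrow> nat \<Rightarrow> nat \<times> nat" where
  "colour BN BQ x = (if x \<in> Univ \<and> blk x \<in> BN then (0, x)
     else if x \<in> Univ \<and> blk x \<in> BQ then (1, blk x) else if x \<in> Univ then (2, 0) else (3, x))"

lemma colour_fixes: "colour BN BQ y = colour BN BQ x \<Longrightarrow> x \<in> Univ \<Longrightarrow> blk x \<in> BN \<Longrightarrow> y = x"
  by (auto simp: colour_def split: if_splits)

lemma colour_eq_block:
  "BN \<inter> BQ = {} \<Longrightarrow> b \<in> BQ \<Longrightarrow> 2 \<le> b \<Longrightarrow> colour BN BQ x = (1, b) \<longleftrightarrow> x \<in> set (block b)"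
  by (auto simp: colour_def Univ_iff mem_block)

lemma colour_preserving_block_iff:
  assumes \<sigma>: "\<forall>x. colour BN BQ (\<sigma> x) = colour BN BQ x"
    and "BN \<inter> BQ = {}" "b \<in> BN \<union> BQ" "2 \<le> b"
  shows "\<sigma> x \<in> set (block b) \<longleftrightarrow> x \<in> set (block b)"
proof (cases "b \<in> BN")
  case True
  then have "y \<in> Univ" "blk y \<in> BN" if "y \<in> set (block b)" for y
    using that set_block_Univ[OF assms(4)] by (auto simp: mem_block)
  then show ?thesis using colour_fixes \<sigma> by metis
next
  case False
  then show ?thesis using assms colour_eq_block by (metis Un_iff)
qed

lemma colour_preserving_bij_betw_Univ:
  assumes "bij \<sigma>" "\<forall>x. colour BN BQ (\<sigma> x) = colour BN BQ x"
  shows "bij_betw \<sigma> Univ Univ"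
proof -
  have Univ: "\<sigma> x \<in> Univ \<longleftrightarrow> x \<in> Univ" for x
    using assms(2)[rule_format, of x] by (auto simp: colour_def split: if_splits)
  have "\<sigma> ` Univ = Univ"
  proof
    show "Univ \<subseteq> \<sigma> ` Univ"
    proof
      fix y assume "y \<in> Univ"
      obtain x where "y = \<sigma> x" using bij_is_surj[OF assms(1)] by (metis surjD)
      then show "y \<in> \<sigma> ` Univ" using Univ \<open>y \<in> Univ\<close> by auto
    qed
  qed (use Univ in auto)
  then show ?thesis using bij_betw_subset[OF assms(1)] by blast
qed

lemma colour_eq_if_agree:
  assumes "x \<in> Univ" "y \<in> Univ" "BN \<inter> BQ = {}"
    and named: "\<forall>b\<in>BN. \<forall>a\<in>set (block b). x = a \<longleftrightarrow> y = a"
    and plain: "\<forall>b\<in>BQ. x \<in> set (block b) \<longleftrightarrow> y \<in> set (block b)"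
  shows "colour BN BQ x = colour BN BQ y"
proof -
  have x: "x \<in> set (block (blk x))" and y: "y \<in> set (block (blk y))"
    using assms(1,2) by (auto simp: Univ_iff)
  consider "blk x \<in> BN \<or> blk y \<in> BN" | "blk x \<notin> BN" "blk y \<notin> BN" "blk x \<in> BQ \<or> blk y \<in> BQ"
    | "blk x \<notin> BN \<union> BQ" "blk y \<notin> BN \<union> BQ"
    by auto
  then show ?thesis
  proof cases
    case 1
    then have "x = y"
      using named[rule_format, OF _ x] named[rule_format, OF _ y] by auto
    then show ?thesis by simp
  next
    case 2
    then consider "blk x \<in> BQ" | "blk y \<in> BQ" by blast
    then have "blk x = blk y"
    proof cases
      case 1
      then have "y \<in> set (block (blk x))" using plain[rule_format, OF 1] x by simp
      then show ?thesis by (simp add: mem_block)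
    next
      case 2
      then have "x \<in> set (block (blk y))" using plain[rule_format, OF 2] y by simp
      then show ?thesis by (simp add: mem_block)
    qed
    then show ?thesis using 2 assms(1,2) by (auto simp: colour_def)
  qed (use assms(1,2) in \<open>simp add: colour_def\<close>)
qed

text \<open>Agreement on these formulas determines an assignment on \<open>V\<close> up to an automorphism of the
  reduct to the symbols of the blocks \<open>BN\<close>, \<open>BQ\<close> and \<open>BR\<close>.\<close>
definition witness_fms :: "nat set \<Rightarrow> nat set \<Rightarrow> nat set \<Rightarrow> nat set \<Rightarrow> fm set" where
  "witness_fms V BN BQ BR =
     (\<lambda>(u, v). FEq (Var u) (Var v)) ` (V \<times> V) \<union>
     (\<lambda>(a, v). FRel (4 * a + 3) [Var v]) ` ((\<Union>b\<in>BN. set (block b)) \<times> V) \<union>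
     (\<lambda>(b, v). FRel (4 * (b div 2) + 1) [Var v]) ` (BQ \<times> V) \<union>
     (\<lambda>(b, vs). FRel (4 * (b div 2)) (map Var vs)) `
       (SIGMA b:BR. {vs. set vs \<subseteq> V \<and> length vs = block_ar b})"

lemma finite_witness_fms:
  assumes "finite V" "finite BN" "finite BQ" "finite BR"
  shows "finite (witness_fms V BN BQ BR)"
proof -
  have "finite (SIGMA b:BR. {vs. set vs \<subseteq> V \<and> length vs = block_ar b})"
    using assms(4) finite_lists_length_eq[OF assms(1)] by (intro finite_SigmaI) auto
  then show ?thesis using assms by (simp add: witness_fms_def)
qed

lemma witness_fms_basic:
  assumes "1 \<le> n" "\<forall>b\<in>BN. 2 \<le> b \<and> b \<in> NB" "\<forall>b\<in>BQ. b div 2 \<in> KQ"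
    "\<forall>b\<in>BR. b div 2 \<in> KD \<and> b div 2 \<le> n"
  shows "witness_fms V BN BQ BR \<subseteq> basic_fms (block_lang KD KQ KE NB) n"
proof
  fix q assume "q \<in> witness_fms V BN BQ BR"
  then consider (eq) u v where "q = FEq (Var u) (Var v)"
    | (name) a b v where "q = FRel (4 * a + 3) [Var v]" "b \<in> BN" "a \<in> set (block b)"
    | (pred) b v where "q = FRel (4 * (b div 2) + 1) [Var v]" "b \<in> BQ"
    | (orient) b vs where "q = FRel (4 * (b div 2)) (map Var vs)" "b \<in> BR" "length vs = block_ar b"
    by (auto simp: witness_fms_def)
  then show "q \<in> basic_fms (block_lang KD KQ KE NB) n"
  proof cases
    case eq
    then show ?thesis using FEq_Var_basic_fms[OF assms(1)] by simp
  next
    case name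
    then have "a \<in> Univ" using assms(2) set_block_Univ by blast
    moreover have "blk a \<in> NB" using name(2,3) assms(2) by (auto simp: mem_block)
    ultimately show ?thesis using name assms(1) by (intro basic_fmsI) (auto simp: rsyms_block_lang)
  next
    case pred
    then show ?thesis using assms(1,3) by (intro basic_fmsI) (auto simp: rsyms_block_lang)
  next
    case orient
    then have "b div 2 \<le> n" using assms(4) by blast
    then have "card (set vs) \<le> n"
      using card_length[of vs] orient(3) unfolding block_ar_def by linarith
    then show ?thesis
      using orient assms(4) by (intro basic_fmsI) (auto simp: rsyms_block_lang block_ar_def)
  qed
qed

lemma witness_fms_agree:
  assumes agree: "\<forall>q\<in>witness_fms V BN BQ BR. sat block_struc e1 q = sat block_struc e2 q"
    and even: "\<forall>b\<in>BQ. even b" and "BR \<subseteq> BQ"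
  shows "\<forall>u\<in>V. \<forall>v\<in>V. e1 u = e1 v \<longleftrightarrow> e2 u = e2 v"
    and "\<forall>v\<in>V. \<forall>b\<in>BN. \<forall>a\<in>set (block b). e1 v = a \<longleftrightarrow> e2 v = a"
    and "\<forall>v\<in>V. \<forall>b\<in>BQ. e1 v \<in> set (block b) \<longleftrightarrow> e2 v \<in> set (block b)"
    and "\<forall>b\<in>BR. \<forall>vs. set vs \<subseteq> V \<longrightarrow> length vs = block_ar b \<longrightarrow>
           oriented b (map e1 vs) = oriented b (map e2 vs)"
proof -
  have two_half: "2 * (b div 2) = b" if "b \<in> BQ" for b using even that by simp
  show "\<forall>u\<in>V. \<forall>v\<in>V. e1 u = e1 v \<longleftrightarrow> e2 u = e2 v"
  proof (intro ballI)
    fix u v assume "u \<in> V" "v \<in> V"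
    then have "FEq (Var u) (Var v) \<in> witness_fms V BN BQ BR" by (auto simp: witness_fms_def)
    then show "e1 u = e1 v \<longleftrightarrow> e2 u = e2 v" using agree by fastforce
  qed
  show "\<forall>v\<in>V. \<forall>b\<in>BN. \<forall>a\<in>set (block b). e1 v = a \<longleftrightarrow> e2 v = a"
  proof (intro ballI)
    fix v b a assume "v \<in> V" "b \<in> BN" "a \<in> set (block b)"
    then have "FRel (4 * a + 3) [Var v] \<in> witness_fms V BN BQ BR"
      unfolding witness_fms_def by (intro UnI1 UnI2 image_eqI[where x = "(a, v)"]) auto
    then show "e1 v = a \<longleftrightarrow> e2 v = a" using agree relM_name by fastforce
  qed
  show "\<forall>v\<in>V. \<forall>b\<in>BQ. e1 v \<in> set (block b) \<longleftrightarrow> e2 v \<in> set (block b)"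
  proof (intro ballI)
    fix v b assume "v \<in> V" "b \<in> BQ"
    then have "FRel (4 * (b div 2) + 1) [Var v] \<in> witness_fms V BN BQ BR"
      unfolding witness_fms_def by (intro UnI1 UnI2 image_eqI[where x = "(b, v)"]) auto
    then show "e1 v \<in> set (block b) \<longleftrightarrow> e2 v \<in> set (block b)"
      using agree relM_pred two_half[OF \<open>b \<in> BQ\<close>] by fastforce
  qed
  show "\<forall>b\<in>BR. \<forall>vs. set vs \<subseteq> V \<longrightarrow> length vs = block_ar b \<longrightarrow>
           oriented b (map e1 vs) = oriented b (map e2 vs)"
  proof (intro ballI allI impI)
    fix b vs assume "b \<in> BR" "set vs \<subseteq> V" "length vs = block_ar b"
    then have "FRel (4 * (b div 2)) (map Var vs) \<in> witness_fms V BN BQ BR"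
      unfolding witness_fms_def by (intro UnI2 image_eqI[where x = "(b, vs)"]) auto
    then show "oriented b (map e1 vs) = oriented b (map e2 vs)"
      using agree two_half \<open>b \<in> BR\<close> \<open>BR \<subseteq> BQ\<close>
      by (metis block_struc_simps(2) relM_orient_even sat_FRel_Var subsetD)
  qed
qed

lemma inj_on_assignment_map:
  assumes "\<forall>u\<in>V. \<forall>v\<in>V. e1 u = e1 v \<longleftrightarrow> e2 u = e2 v"
  shows "\<forall>v\<in>V. (e2 \<circ> inv_into V e1) (e1 v) = e2 v" "inj_on (e2 \<circ> inv_into V e1) (e1 ` V)"
proof -
  show map: "\<forall>v\<in>V. (e2 \<circ> inv_into V e1) (e1 v) = e2 v"
  proof
    fix v assume v: "v \<in> V"
    then have "inv_into V e1 (e1 v) \<in> V" "e1 (inv_into V e1 (e1 v)) = e1 v"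
      by (auto intro: inv_into_into f_inv_into_f)
    then show "(e2 \<circ> inv_into V e1) (e1 v) = e2 v" using assms v by simp
  qed
  show "inj_on (e2 \<circ> inv_into V e1) (e1 ` V)"
  proof (rule inj_onI)
    fix x y assume "x \<in> e1 ` V" "y \<in> e1 ` V" "(e2 \<circ> inv_into V e1) x = (e2 \<circ> inv_into V e1) y"
    then obtain u v where "u \<in> V" "v \<in> V" "x = e1 u" "y = e1 v" "e2 u = e2 v"
      using map by auto
    then show "x = y" using assms by blast
  qed
qed

lemma assignment_even_extension:
  assumes eq: "\<forall>u\<in>V. \<forall>v\<in>V. e1 u = e1 v \<longleftrightarrow> e2 u = e2 v"
    and mem: "\<forall>v\<in>V. e1 v \<in> set (block b) \<longleftrightarrow> e2 v \<in> set (block b)"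
    and orient: "\<forall>vs. set vs \<subseteq> V \<longrightarrow> length vs = block_ar b \<longrightarrow>
      oriented b (map e1 vs) = oriented b (map e2 vs)"
  obtains \<pi> where "\<pi> permutes set (block b)" "evenperm \<pi>"
    "\<forall>v\<in>V. e1 v \<in> set (block b) \<longrightarrow> \<pi> (e1 v) = e2 v"
proof -
  define f where "f = e2 \<circ> inv_into V e1"
  define A where "A = e1 ` V \<inter> set (block b)"
  have f: "\<forall>v\<in>V. f (e1 v) = e2 v" "inj_on f (e1 ` V)"
    using inj_on_assignment_map[OF eq] by (simp_all add: f_def)
  have "inj_on f A" "A \<subseteq> set (block b)" "f ` A \<subseteq> set (block b)"
    using f mem by (auto simp: A_def intro: inj_on_subset)
  moreover have "\<forall>xs. block_tuple b xs \<and> set xs \<subseteq> A \<longrightarrow> oriented b (map f xs) = oriented b xs"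
  proof (intro allI impI)
    fix xs assume "block_tuple b xs \<and> set xs \<subseteq> A"
    then have xs: "block_tuple b xs" "set xs \<subseteq> A" by simp_all
    define vs where "vs = map (inv_into V e1) xs"
    have "e1 (inv_into V e1 x) = x" if "x \<in> set xs" for x
      using xs(2) that by (auto simp: A_def f_inv_into_f)
    then have "map e1 vs = xs" by (simp add: vs_def map_idI)
    moreover have "map e2 vs = map f xs" by (simp add: vs_def f_def)
    moreover have "set vs \<subseteq> V" "length vs = block_ar b"
      using xs by (auto simp: vs_def A_def block_tuple_def inv_into_into)
    ultimately show "oriented b (map f xs) = oriented b xs" using orient by metis
  qed
  ultimately obtain \<pi> where "\<pi> permutes set (block b)" "evenperm \<pi>" "\<forall>a\<in>A. \<pi> a = f a"
    by (rule oriented_even_extension)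
  then show ?thesis using that f(1) by (auto simp: A_def)
qed

lemma exists_block_automorphism:
  assumes fin: "finite V" "finite BR" and blocks: "BR \<subseteq> BQ" "BN \<inter> BQ = {}" "\<forall>b\<in>BQ. 2 \<le> b"
    and e: "range e1 \<subseteq> Univ" "range e2 \<subseteq> Univ"
    and eq: "\<forall>u\<in>V. \<forall>v\<in>V. e1 u = e1 v \<longleftrightarrow> e2 u = e2 v"
    and named: "\<forall>v\<in>V. \<forall>b\<in>BN. \<forall>a\<in>set (block b). e1 v = a \<longleftrightarrow> e2 v = a"
    and plain: "\<forall>v\<in>V. \<forall>b\<in>BQ. e1 v \<in> set (block b) \<longleftrightarrow> e2 v \<in> set (block b)"
    and orient: "\<forall>b\<in>BR. \<forall>vs. set vs \<subseteq> V \<longrightarrow> length vs = block_ar b \<longrightarrow>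
      oriented b (map e1 vs) = oriented b (map e2 vs)"
  obtains \<sigma> where "bij \<sigma>" "\<forall>x. colour BN BQ (\<sigma> x) = colour BN BQ x"
    "\<forall>b\<in>BR. \<exists>\<pi>. \<pi> permutes set (block b) \<and> evenperm \<pi> \<and> (\<forall>x\<in>set (block b). \<sigma> x = \<pi> x)"
    "\<forall>v\<in>V. \<sigma> (e1 v) = e2 v"
proof -
  define f where "f = e2 \<circ> inv_into V e1"
  have f: "\<forall>v\<in>V. f (e1 v) = e2 v" "inj_on f (e1 ` V)"
    using inj_on_assignment_map[OF eq] by (simp_all add: f_def)
  have "colour BN BQ (e2 v) = colour BN BQ (e1 v)" if "v \<in> V" for v
    using e named plain that blocks(2) by (intro colour_eq_if_agree) auto
  then have colour_f: "\<forall>a\<in>e1 ` V. colour BN BQ (f a) = colour BN BQ a" using f(1) by simp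
  have "\<exists>\<pi>. \<pi> permutes set (block b) \<and> evenperm \<pi> \<and>
      (\<forall>v\<in>V. e1 v \<in> set (block b) \<longrightarrow> \<pi> (e1 v) = e2 v)" if b: "b \<in> BR" for b
  proof -
    have "\<forall>v\<in>V. e1 v \<in> set (block b) \<longleftrightarrow> e2 v \<in> set (block b)" using plain blocks(1) b by blast
    moreover have "\<forall>vs. set vs \<subseteq> V \<longrightarrow> length vs = block_ar b \<longrightarrow>
        oriented b (map e1 vs) = oriented b (map e2 vs)" using orient b by blast
    ultimately obtain \<pi> where "\<pi> permutes set (block b)" "evenperm \<pi>"
      "\<forall>v\<in>V. e1 v \<in> set (block b) \<longrightarrow> \<pi> (e1 v) = e2 v"
      by (rule assignment_even_extension[OF eq])
    then show ?thesis by blast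
  qed
  then have "\<forall>b\<in>BR. \<exists>\<pi>. \<pi> permutes set (block b) \<and> evenperm \<pi> \<and>
      (\<forall>v\<in>V. e1 v \<in> set (block b) \<longrightarrow> \<pi> (e1 v) = e2 v)" by blast
  from bchoice[OF this] obtain \<pi>s where \<pi>s: "\<forall>b\<in>BR. \<pi>s b permutes set (block b) \<and>
      evenperm (\<pi>s b) \<and> (\<forall>v\<in>V. e1 v \<in> set (block b) \<longrightarrow> \<pi>s b (e1 v) = e2 v)"
    by blast
  have block_class: "{x. colour BN BQ x = (1, b)} = set (block b)" if "b \<in> BR" for b
    using colour_eq_block[OF blocks(2)] blocks(1,3) that by blast
  let ?K = "(\<lambda>b. (1, b)) ` BR"
  have "\<forall>k\<in>?K. finite {x. colour BN BQ x = k}" using block_class by auto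
  moreover have "\<forall>k\<in>?K. \<pi>s (snd k) permutes {x. colour BN BQ x = k}" using block_class \<pi>s by auto
  moreover have "\<forall>a\<in>e1 ` V. colour BN BQ a \<in> ?K \<longrightarrow> \<pi>s (snd (colour BN BQ a)) a = f a"
  proof (intro ballI impI)
    fix a assume a: "a \<in> e1 ` V" "colour BN BQ a \<in> ?K"
    obtain b v where bv: "b \<in> BR" "colour BN BQ a = (1, b)" "v \<in> V" "a = e1 v" using a by blast
    then have "e1 v \<in> set (block b)" using block_class[OF bv(1)] by blast
    then show "\<pi>s (snd (colour BN BQ a)) a = f a" using \<pi>s bv f(1) by simp
  qed
  ultimately obtain \<sigma> where \<sigma>: "bij \<sigma>" "\<forall>x. colour BN BQ (\<sigma> x) = colour BN BQ x"
    "\<forall>a\<in>e1 ` V. \<sigma> a = f a" "\<forall>x. colour BN BQ x \<in> ?K \<longrightarrow> \<sigma> x = \<pi>s (snd (colour BN BQ x)) x"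
    by (rule extend_colour_preserving_bij_classes[OF finite_imageI[OF fin(1)] f(2) colour_f
        finite_imageI[OF fin(2)]])
  have "\<forall>x\<in>set (block b). \<sigma> x = \<pi>s b x" if b: "b \<in> BR" for b
  proof
    fix x assume "x \<in> set (block b)"
    then have "colour BN BQ x = (1, b)" using block_class[OF b] by blast
    moreover have "(1, b) \<in> ?K" using b by blast
    ultimately show "\<sigma> x = \<pi>s b x" using \<sigma>(4)[rule_format, of x] by (metis snd_conv)
  qed
  then have "\<forall>b\<in>BR. \<exists>\<pi>. \<pi> permutes set (block b) \<and> evenperm \<pi> \<and> (\<forall>x\<in>set (block b). \<sigma> x = \<pi> x)"
    using \<pi>s by blast
  moreover have "\<forall>v\<in>V. \<sigma> (e1 v) = e2 v" using \<sigma>(3) f(1) by simp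
  ultimately show ?thesis using that[OF \<sigma>(1,2)] by blast
qed

lemma preserves_rels_block_lang:
  assumes p: "wf_fm (block_lang KD KQ KE NB) p"
    and H0: "0 \<notin> KD \<union> KQ \<union> KE" and HE: "\<forall>k\<in>KE. 2 * k + 1 \<in> NB"
    and blocks: "sym_block ` rels p \<subseteq> BN \<union> BQ" "BN \<inter> BQ = {}" "BQ \<inter> NB = {}"
      "{b \<in> BQ. b div 2 \<in> KD} \<subseteq> BR"
    and \<sigma>: "\<forall>x. colour BN BQ (\<sigma> x) = colour BN BQ x"
      "\<forall>b\<in>BR. \<exists>\<pi>. \<pi> permutes set (block b) \<and> evenperm \<pi> \<and> (\<forall>x\<in>set (block b). \<sigma> x = \<pi> x)"
  shows "preserves_rels block_struc (rels p) \<sigma>"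
  unfolding preserves_rels_def block_struc_simps
proof (intro ballI allI impI, rule relM_map_invariant)
  fix r xs assume r: "r \<in> rels p"
  then obtain k where rk: "(r, k) \<in> rsyms (block_lang KD KQ KE NB)" using wf_fm_rels[OF p] by blast
  have b: "sym_block r \<in> BN \<union> BQ" "2 \<le> sym_block r"
    using blocks(1) r sym_block_ge_2[OF rk H0] by auto
  have fixed: "\<sigma> x = x" if "sym_block r \<in> BN" "x \<in> set (block (sym_block r))" for x
    using colour_fixes \<sigma>(1) that set_block_Univ[OF b(2)] by (metis mem_block subsetD)
  show "\<forall>x. \<sigma> x \<in> set (block (sym_block r)) \<longleftrightarrow> x \<in> set (block (sym_block r))"
    using colour_preserving_block_iff[OF \<sigma>(1) blocks(2) b] by blast
  show "\<exists>\<pi>. \<pi> permutes set (block (sym_block r)) \<and> evenperm \<pi> \<and>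
      (\<forall>x\<in>set (block (sym_block r)). \<sigma> x = \<pi> x)" if "r mod 4 = 0 \<or> r mod 4 = 2"
  proof (cases "sym_block r \<in> BN")
    case True
    then show ?thesis using fixed permutes_id evenperm_id by (metis id_apply)
  next
    case False
    then have "sym_block r \<in> BQ" using b(1) by blast
    then have "sym_block r \<in> BR"
      using rk that HE blocks(3,4) by (auto simp: rsyms_block_lang sym_block_def)
    then show ?thesis using \<sigma>(2) by blast
  qed
  show "\<forall>x. \<sigma> x = r div 4 \<longleftrightarrow> x = r div 4" if "r mod 4 = 3"
  proof -
    have a: "r div 4 \<in> Univ" "blk (r div 4) \<in> NB" "sym_block r = blk (r div 4)"
      using rk that by (auto simp: rsyms_block_lang sym_block_def)
    then have "blk (r div 4) \<in> BN" using b(1) blocks(3) by auto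
    then show ?thesis using colour_fixes \<sigma>(1) a(1) by metis
  qed
qed

section \<open>Arities of the block theories\<close>

lemma nary_theory_Th_block_lang:
  assumes n: "1 \<le> n" and H0: "0 \<notin> KD \<union> KQ \<union> KE"
    and HD: "\<forall>k\<in>KD. 2 * k \<in> NB \<or> (k \<in> KQ \<and> k \<le> n)" and HE: "\<forall>k\<in>KE. 2 * k + 1 \<in> NB"
  shows "nary_theory (block_lang KD KQ KE NB) (Th (block_lang KD KQ KE NB) block_struc) n"
proof (rule nary_theory_Th_if_determined[OF n])
  fix p assume p: "wf_fm (block_lang KD KQ KE NB) p"
  define BN where "BN = sym_block ` rels p \<inter> NB"
  define BQ where "BQ = sym_block ` rels p - NB"
  define BR where "BR = {b \<in> BQ. b div 2 \<in> KD}"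
  have ge_2: "2 \<le> sym_block r" if "r \<in> rels p" for r
    using wf_fm_rels[OF p that] sym_block_ge_2[OF _ H0] by blast
  have unnamed: "sym_block r = 2 * (r div 4) \<and> r div 4 \<in> KQ \<and> (r div 4 \<in> KD \<longrightarrow> r div 4 \<le> n)"
    if "r \<in> rels p" "sym_block r \<notin> NB" for r
    using wf_fm_rels[OF p that(1)] sym_block_unnamed[OF _ that(2) HD HE] by blast
  have BN: "2 \<le> b \<and> b \<in> NB" if "b \<in> BN" for b
    using that ge_2 by (auto simp: BN_def)
  have BQ: "even b \<and> 2 \<le> b \<and> b div 2 \<in> KQ \<and> (b div 2 \<in> KD \<longrightarrow> b div 2 \<le> n)" if b: "b \<in> BQ" for b
  proof -
    obtain r where r: "r \<in> rels p" "sym_block r \<notin> NB" "b = sym_block r"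
      using b by (auto simp: BQ_def)
    then show ?thesis using unnamed[OF r(1,2)] ge_2[OF r(1)] by simp
  qed
  have fin: "finite BN" "finite BQ" "finite BR"
    using finite_rels by (auto simp: BN_def BQ_def BR_def)
  have BR: "BR \<subseteq> BQ" "BN \<inter> BQ = {}" by (auto simp: BR_def BN_def BQ_def)
  let ?W = "witness_fms (fv p) BN BQ BR"
  have determined: "sat block_struc e1 p = sat block_struc e2 p"
    if e: "range e1 \<subseteq> Univ" "range e2 \<subseteq> Univ"
      and agree: "\<forall>q\<in>?W. sat block_struc e1 q = sat block_struc e2 q" for e1 e2
  proof -
    obtain \<sigma> where \<sigma>: "bij \<sigma>" "\<forall>x. colour BN BQ (\<sigma> x) = colour BN BQ x"
      "\<forall>b\<in>BR. \<exists>\<pi>. \<pi> permutes set (block b) \<and> evenperm \<pi> \<and> (\<forall>x\<in>set (block b). \<sigma> x = \<pi> x)"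
      "\<forall>v\<in>fv p. \<sigma> (e1 v) = e2 v"
      using exists_block_automorphism[OF finite_fv fin(3) BR _ e
          witness_fms_agree[OF agree _ BR(1)]] BQ
      by blast
    have "preserves_rels block_struc (rels p) \<sigma>"
      by (rule preserves_rels_block_lang[OF p H0 HE _ BR(2) _ _ \<sigma>(2,3)])
        (auto simp: BN_def BQ_def BR_def)
    then have "sat block_struc (\<sigma> \<circ> e1) p = sat block_struc e1 p"
      using sat_automorphism[OF fsyms_block_lang p] colour_preserving_bij_betw_Univ[OF \<sigma>(1,2)] e(1)
      by simp
    moreover have "sat block_struc (\<sigma> \<circ> e1) p = sat block_struc e2 p"
      using \<sigma>(4) by (intro sat_cong) simp
    ultimately show ?thesis by simp
  qed
  have "\<forall>b\<in>BN. 2 \<le> b \<and> b \<in> NB" "\<forall>b\<in>BQ. b div 2 \<in> KQ"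
    "\<forall>b\<in>BR. b div 2 \<in> KD \<and> b div 2 \<le> n"
    using BN BQ unfolding BR_def by blast+
  then have basic: "?W \<subseteq> basic_fms (block_lang KD KQ KE NB) n" by (rule witness_fms_basic[OF n])
  show "\<exists>F. finite F \<and> F \<subseteq> basic_fms (block_lang KD KQ KE NB) n \<and>
      (\<forall>e1 e2. range e1 \<subseteq> dom block_struc \<longrightarrow> range e2 \<subseteq> dom block_struc \<longrightarrow>
         (\<forall>r\<in>F. sat block_struc e1 r = sat block_struc e2 r) \<longrightarrow>
         sat block_struc e1 p = sat block_struc e2 p)"
  proof (intro exI[of _ ?W] conjI allI impI)
    show "finite ?W" by (rule finite_witness_fms[OF finite_fv fin])
    show "?W \<subseteq> basic_fms (block_lang KD KQ KE NB) n" by (rule basic)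
    fix e1 e2 assume "range e1 \<subseteq> dom block_struc" "range e2 \<subseteq> dom block_struc"
      "\<forall>r\<in>?W. sat block_struc e1 r = sat block_struc e2 r"
    then show "sat block_struc e1 p = sat block_struc e2 p" using determined[of e1 e2] by simp
  qed
qed

lemma has_ar_Th_block_lang_enat:
  assumes "1 \<le> m" "0 \<notin> KD \<union> KQ \<union> KE"
    "\<forall>k\<in>KD. 2 * k \<in> NB \<or> (k \<in> KQ \<and> k \<le> m)" "\<forall>k\<in>KE. 2 * k + 1 \<in> NB"
    and "2 \<le> m \<Longrightarrow> m \<in> KD" "2 * m \<notin> NB"
  shows "has_ar (block_lang KD KQ KE NB) (Th (block_lang KD KQ KE NB) block_struc) (enat m)"
proof -
  have "\<not> nary_theory (block_lang KD KQ KE NB) (Th (block_lang KD KQ KE NB) block_struc) (m - 1)"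
  proof (cases "m = 1")
    case False
    then show ?thesis
      using not_nary_theory_Th_block_lang_even[of "m - 1"] assms(1,5,6) by simp
  qed (simp add: not_nary_theory_Th_block_lang_0)
  then show ?thesis
    using nary_theory_Th_block_lang[OF assms(1-4)] assms(1) by (simp add: has_ar_def)
qed

lemma has_ar_Th_block_lang_infinity:
  assumes "{k. 1 \<le> k} \<subseteq> KE" "NB = {}"
  shows "has_ar (block_lang KD KQ KE NB) (Th (block_lang KD KQ KE NB) block_struc) \<infinity>"
proof -
  have "\<not> nary_theory (block_lang KD KQ KE NB) (Th (block_lang KD KQ KE NB) block_struc) n" for n
  proof (cases n)
    case (Suc j)
    have "Suc n \<in> KE" using assms(1) by auto
    then show ?thesis using not_nary_theory_Th_block_lang_odd[of n] assms(2) Suc by simp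
  qed (simp add: not_nary_theory_Th_block_lang_0)
  then show ?thesis by (simp add: has_ar_def)
qed

lemma arities_of_block_lang_expansion:
  assumes "has_ar (block_lang KD KQ KE NB) (Th (block_lang KD KQ KE NB) block_struc) \<mu>"
    and "has_ar (block_lang KD' KQ' KE' NB') (Th (block_lang KD' KQ' KE' NB') block_struc) \<nu>"
    and "KD \<subseteq> KD'" "KQ \<subseteq> KQ'" "KE \<subseteq> KE'" "NB \<subseteq> NB'"
  shows "\<exists>L T L' T'. complete_theory L T \<and> expansion L T L' T' \<and> has_ar L T \<mu> \<and> has_ar L' T' \<nu>"
proof -
  have "sublang (block_lang KD KQ KE NB) (block_lang KD' KQ' KE' NB')"
    using assms(3-6) by (auto simp: sublang_def block_lang_def)
  then show ?thesis
    using assms(1,2) complete_theory_Th expansion_Th is_struc_block_struc[OF fsyms_block_lang]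
    by blast
qed

theorem theorem3p10:
  fixes \<mu> \<nu> :: enat
  assumes "\<mu> \<noteq> 0" and "\<nu> \<noteq> 0"
  shows "\<exists>L T L' T'. complete_theory L T \<and> expansion L T L' T' \<and>
           has_ar L T \<mu> \<and> has_ar L' T' \<nu>"
proof -
  let ?E = "{k. 1 \<le> k}"
  consider (le) m n where "\<mu> = enat m" "\<nu> = enat n" "1 \<le> m" "m \<le> n"
    | (gt) m n where "\<mu> = enat m" "\<nu> = enat n" "1 \<le> n" "n < m"
    | (fin_inf) m where "\<mu> = enat m" "\<nu> = \<infinity>" "1 \<le> m"
    | (inf_fin) n where "\<mu> = \<infinity>" "\<nu> = enat n" "1 \<le> n"
    | (inf_inf) "\<mu> = \<infinity>" "\<nu> = \<infinity>"
    using assms by (cases \<mu>; cases \<nu>) (auto simp: zero_enat_def, metis not_le)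
  then show ?thesis
  proof cases
    case (le m n)
    show ?thesis unfolding le(1,2) using le(3,4)
      by (intro arities_of_block_lang_expansion[of "{m}" "{m}" "{}" "{}" _ "{m, n}" "{m, n}" "{}"
            "{}"] has_ar_Th_block_lang_enat) auto
  next
    case (gt m n)
    show ?thesis unfolding gt(1,2) using gt(3,4)
      by (intro arities_of_block_lang_expansion[of "{m}" "{m}" "{}" "{}" _ "{m, n}" "{m, n}" "{}"
            "{2 * m}"] has_ar_Th_block_lang_enat) auto
  next
    case (fin_inf m)
    show ?thesis unfolding fin_inf(1,2) using fin_inf(3)
      by (intro arities_of_block_lang_expansion[of "{m}" "{m}" "{}" "{}" _ "{m}" "{m}" ?E "{}"]
          has_ar_Th_block_lang_enat has_ar_Th_block_lang_infinity) auto
  next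
    case (inf_fin n)
    show ?thesis unfolding inf_fin(1,2) using inf_fin(3)
      by (intro arities_of_block_lang_expansion[of "{}" "{}" ?E "{}" _ "{n}" "{n}" ?E "{b. odd b}"]
          has_ar_Th_block_lang_enat has_ar_Th_block_lang_infinity) auto
  next
    case inf_inf
    show ?thesis unfolding inf_inf
      by (intro arities_of_block_lang_expansion[of "{}" "{}" ?E "{}" _ "{}" "{}" ?E "{}"]
          has_ar_Th_block_lang_infinity) auto
  qed
qed

end
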